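(* Let $f:\mathbb{R}^n\to\mathbb{R}$ be twice continuously differentiable with $L$-Lipschitz gradient, and let $x^*$ be a strict saddle point of $f$. If $\{x_k\}_{k\ge0}$ is generated by the PBCD method with step size $0<\alpha<\frac1L$ from an initial point $x_0$ distributed according to $\nu$, then $$\mathbb{P}_\nu\left[\lim_{k\to\infty}x_k=x^*\right]=0.$$
   Context: $\|\nabla f(x)-\nabla f(y)\|\le L\|x-y\|$ for all $x,y$, with $L>0$. The variable is partitioned as $x=(x(1),\dots,x(p))$, $x(t)\in\mathbb{R}^{n_t}$, $\sum_t n_t=n$. PBCD (proximal block coordinate descent) method: given $x_k$, set $x_k^0=x_k$ and for $s=1,\dots,p$ let $x_k^s(s)$ be the (unique) minimizer over $u\in\mathbb{R}^{n_s}$ of $f(x_k^{s-1}(1),\dots,x_k^{s-1}(s-1),u,x_k^{s-1}(s+1),\dots,x_k^{s-1}(p))+\frac{1}{2\alpha}\|u-x_k^{s-1}(s)\|_2^2$, and $x_k^s(t)=x_k^{s-1}(t)$ for $t\ne s$; then $x_{k+1}=x_k^p$. A strict saddle is a point $x^*$ with $\nabla f(x^* )=0$ and $\lambda_{\min}(\nabla^2 f(x^* ))<0$. $\nu$ is a probability measure on $\mathbb{R}^n$ absolutely continuous with respect to Lebesgue measure. *)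

theory Defs
  imports "HOL-Analysis.Analysis" "HOL-Probability.Probability"
begin

definition block_dist2 :: "'n::finite set \<Rightarrow> real^'n \<Rightarrow> real^'n \<Rightarrow> real" where
  "block_dist2 S u x = (\<Sum>i\<in>S. (u$i - x$i)^2)"

definition block_step :: "(real^'n::finite \<Rightarrow> real) \<Rightarrow> real \<Rightarrow> 'n set \<Rightarrow> real^'n \<Rightarrow> real^'n" where
  "block_step f \<alpha> S x =
     (THE y. (\<forall>i. i \<notin> S \<longrightarrow> y$i = x$i) \<and>
        (\<forall>z. (\<forall>i. i \<notin> S \<longrightarrow> z$i = x$i) \<longrightarrow>
           f y + block_dist2 S y x / (2*\<alpha>) \<le> f z + block_dist2 S z x / (2*\<alpha>)))"

definition pbcd :: "(real^'n::finite \<Rightarrow> real) \<Rightarrow> real \<Rightarrow> 'n set list \<Rightarrow> real^'n \<Rightarrow> real^'n" where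
  "pbcd f \<alpha> B x = fold (block_step f \<alpha>) B x"

definition block_partition :: "'n::finite set list \<Rightarrow> bool" where
  "block_partition B \<longleftrightarrow> (\<forall>S\<in>set B. S \<noteq> {}) \<and> \<Union>(set B) = UNIV \<and>
     (\<forall>i<length B. \<forall>j<length B. i \<noteq> j \<longrightarrow> B!i \<inter> B!j = {})"

definition lambda_min :: "real^'n^'n \<Rightarrow> real" where
  "lambda_min A = Min {c. \<exists>v. v \<noteq> 0 \<and> A *v v = c *\<^sub>R v}"

end

theory Submission
  imports Defs
begin

text \<open>Because \<open>\<alpha> < 1/L\<close>, each proximal block step is the unique solution \<open>y\<close> of the implicit
  gradient step \<open>y = x - \<alpha> P\<^sub>S \<nabla>f(y)\<close>, so a PBCD sweep is Lipschitz and has the Lipschitz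
  left inverse obtained by undoing the blocks, \<open>y \<mapsto> y + \<alpha> P\<^sub>S \<nabla>f(y)\<close>, in reverse order.
  Near the strict saddle \<open>x\<^sup>*\<close> with Hessian \<open>H\<close>, the difference \<open>e\<close> of two trajectories obeys a
  perturbed linear sweep, and one sweep raises \<open>Q(e) = -e\<cdot>He - \<gamma>|e|\<^sup>2\<close> by at least \<open>c|e|\<^sup>2\<close>
  whenever \<open>Q(e) \<ge> 0\<close>. Two trajectories that stay near \<open>x\<^sup>*\<close> therefore have \<open>Q(x - y) \<le> 0\<close>,
  which keeps \<open>x - y\<close> in a cone around the hyperplane orthogonal to a negative eigenvector of \<open>H\<close>:
  the local stable set is a Lipschitz graph over that hyperplane, hence Lebesgue-null. A point whose
  trajectory converges to \<open>x\<^sup>*\<close> is sent into the local stable set by some iterate, so the set of such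
  points is a countable union of Lipschitz images of a null set. This Borel set is then also
  \<open>\<nu>\<close>-null by absolute continuity.\<close>

definition block_proj :: "'n::finite set \<Rightarrow> real^'n \<Rightarrow> real^'n" where
  "block_proj S w = (\<chi> i. if i \<in> S then w$i else 0)"

lemma block_proj_nth [simp]: "block_proj S w $ i = (if i \<in> S then w$i else 0)"
  by (simp add: block_proj_def)

lemma norm_block_proj_le: "norm (block_proj S w) \<le> norm w"
  by (rule norm_le_componentwise_cart) auto

lemma block_proj_diff: "block_proj S (a - b) = block_proj S a - block_proj S b"
  by (simp add: vec_eq_iff)

lemma inner_block_proj_right:
  assumes "block_proj S d = d"
  shows "d \<bullet> block_proj S w = d \<bullet> w"
proof -
  have "d$i * (if i \<in> S then w$i else 0) = d$i * w$i" for i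
    using assms[unfolded vec_eq_iff, rule_format, of i] by auto
  then show ?thesis
    unfolding inner_vec_def inner_real_def block_proj_nth by (rule sum.cong[OF refl])
qed

section \<open>Functions with Lipschitz gradient\<close>

lemma lipschitz_gradient_lower_bound:
  fixes f :: "'a::real_inner \<Rightarrow> real"
  assumes grad: "\<And>x. (f has_derivative (\<lambda>h. gradf x \<bullet> h)) (at x)"
    and lip: "\<And>x y. norm (gradf x - gradf y) \<le> L * norm (x - y)"
  shows "f z \<ge> f y + gradf y \<bullet> (z - y) - L/2 * (norm (z - y))^2"
proof -
  define w where "w = z - y"
  define \<phi> where "\<phi> t = f (y + t *\<^sub>R w) - t * (gradf y \<bullet> w) + L/2 * t^2 * (norm w)^2" for t
  have \<phi>': "(\<phi> has_derivative (\<lambda>h. h * (gradf (y + t *\<^sub>R w) \<bullet> w - gradf y \<bullet> w + L * t * (norm w)^2)))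
      (at t within X)" for t X
  proof -
    have "((\<lambda>t. y + t *\<^sub>R w) has_derivative (\<lambda>h. h *\<^sub>R w)) (at t within X)"
      by (auto intro!: derivative_eq_intros)
    note c = has_derivative_compose[OF this has_derivative_at_withinI[OF grad]]
    show ?thesis unfolding \<phi>_def
      by (rule derivative_eq_intros c | simp)+ (simp add: algebra_simps power2_eq_square)
  qed
  obtain t where t: "t \<in> {0<..<1}"
    and mvt: "\<phi> 1 - \<phi> 0 = (gradf (y + t *\<^sub>R w) - gradf y) \<bullet> w + L * t * (norm w)^2"
    using mvt_simple[of 0 1 \<phi>, OF _ \<phi>'] by (auto simp: inner_diff_left)
  have "\<bar>(gradf (y + t *\<^sub>R w) - gradf y) \<bullet> w\<bar> \<le> norm (gradf (y + t *\<^sub>R w) - gradf y) * norm w"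
    by (rule Cauchy_Schwarz_ineq2)
  also have "\<dots> \<le> L * norm (t *\<^sub>R w) * norm w"
    using lip[of "y + t *\<^sub>R w" y] by (intro mult_right_mono) auto
  also have "\<dots> = L * t * (norm w)^2"
    using t by (simp add: power2_eq_square)
  finally have "\<phi> 1 \<ge> \<phi> 0"
    using mvt by linarith
  then show ?thesis unfolding \<phi>_def w_def by simp
qed

lemma second_difference_mvt:
  fixes f :: "'a::real_inner \<Rightarrow> real"
  assumes grad: "\<And>x. (f has_derivative (\<lambda>h. gradf x \<bullet> h)) (at x)" and s: "0 < s"
  obtains \<tau> where "\<tau> \<in> {0<..<s}"
    and "f (x0 + s *\<^sub>R u + s *\<^sub>R w) - f (x0 + s *\<^sub>R u) - f (x0 + s *\<^sub>R w) + f x0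
           = s * ((gradf (x0 + \<tau> *\<^sub>R u + s *\<^sub>R w) - gradf (x0 + \<tau> *\<^sub>R u)) \<bullet> u)"
proof -
  define h where "h t = f (x0 + t *\<^sub>R u + s *\<^sub>R w) - f (x0 + t *\<^sub>R u)" for t
  define h' where "h' t = (gradf (x0 + t *\<^sub>R u + s *\<^sub>R w) - gradf (x0 + t *\<^sub>R u)) \<bullet> u" for t
  have h': "(h has_derivative (\<lambda>r. r * h' t)) (at t within X)" for t X
  proof -
    have "((\<lambda>t. x0 + t *\<^sub>R u + c) has_derivative (\<lambda>r. r *\<^sub>R u)) (at t within X)" for c
      by (auto intro!: derivative_eq_intros)
    note line = has_derivative_compose[OF this has_derivative_at_withinI[OF grad]]
    from has_derivative_diff[OF line[of "s *\<^sub>R w"] line[of 0]] show ?thesis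
      unfolding h_def h'_def by (simp add: inner_diff_left algebra_simps)
  qed
  obtain \<tau> where "\<tau> \<in> {0<..<s}" "h s - h 0 = s * h' \<tau>"
    using mvt_simple[of 0 s h "\<lambda>t r. r * h' t", OF s h'] by auto
  then show ?thesis
    by (intro that) (auto simp: h_def h'_def algebra_simps)
qed

lemma has_derivative_increment_bound:
  fixes g :: "'a::real_normed_vector \<Rightarrow> 'b::real_normed_vector"
  assumes deriv: "(g has_derivative g') (at x0)" and e: "e > 0"
  obtains d where "d > 0" "\<And>y z r. norm (y - x0) \<le> r \<Longrightarrow> norm (z - x0) \<le> r \<Longrightarrow> r < d \<Longrightarrow>
      norm (g y - g z - g' (y - z)) \<le> 2 * e * r"
proof -
  obtain d where d: "d > 0" and lin: "\<And>y. norm (y - x0) < d \<Longrightarrow>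
      norm (g y - g x0 - g' (y - x0)) \<le> e * norm (y - x0)"
    using deriv[unfolded has_derivative_at_alt] e by blast
  have near: "norm (g y - g x0 - g' (y - x0)) \<le> e * r" if "norm (y - x0) \<le> r" "r < d" for y r
  proof -
    have "norm (g y - g x0 - g' (y - x0)) \<le> e * norm (y - x0)"
      using that by (intro lin) linarith
    also have "\<dots> \<le> e * r"
      using that e by (intro mult_left_mono) auto
    finally show ?thesis .
  qed
  have split: "g y - g z - g' (y - z) = (g y - g x0 - g' (y - x0)) - (g z - g x0 - g' (z - x0))"
    for y z
    using linear_diff[OF has_derivative_linear[OF deriv], of "y - x0" "z - x0"] by simp
  show ?thesis
  proof (rule that[OF d])
    fix y z r
    assume "norm (y - x0) \<le> r" "norm (z - x0) \<le> r" "r < d"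
    then have "norm (g y - g x0 - g' (y - x0)) + norm (g z - g x0 - g' (z - x0)) \<le> e * r + e * r"
      by (intro add_mono near)
    moreover have "norm (g y - g z - g' (y - z))
        \<le> norm (g y - g x0 - g' (y - x0)) + norm (g z - g x0 - g' (z - x0))"
      by (subst split) (rule norm_triangle_ineq4)
    ultimately show "norm (g y - g z - g' (y - z)) \<le> 2 * e * r"
      by linarith
  qed
qed

lemma second_difference_approx:
  fixes f :: "real^'n::finite \<Rightarrow> real" and H :: "real^'n^'n"
  assumes grad: "\<And>x. (f has_derivative (\<lambda>h. gradf x \<bullet> h)) (at x)"
    and hess: "(gradf has_derivative (\<lambda>h. H *v h)) (at x0)"
    and e: "e > 0"
  shows "\<exists>d>0. \<forall>s. 0 < s \<and> s < d \<longrightarrow>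
     \<bar>(f (x0 + s *\<^sub>R u + s *\<^sub>R w) - f (x0 + s *\<^sub>R u) - f (x0 + s *\<^sub>R w) + f x0)
        - s^2 * (u \<bullet> (H *v w))\<bar> \<le> e * s^2"
proof -
  define K where "K = norm u + norm w + 1"
  have K: "K > 0" "norm u \<le> K" "norm w \<le> K"
    unfolding K_def using norm_ge_zero[of u] norm_ge_zero[of w] by linarith+
  define e1 where "e1 = e / (4 * K^2)"
  have "e1 > 0"
    using e K by (simp add: e1_def)
  then obtain d where d: "d > 0" and incr: "\<And>y z r. norm (y - x0) \<le> r \<Longrightarrow> norm (z - x0) \<le> r \<Longrightarrow>
      r < d \<Longrightarrow> norm (gradf y - gradf z - H *v (y - z)) \<le> 2 * e1 * r"
    using has_derivative_increment_bound[OF hess] by blast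
  show ?thesis
  proof (intro exI[of _ "d / (2*K)"] conjI allI impI)
    show "d / (2*K) > 0"
      using d K by simp
    fix s
    assume s: "0 < s \<and> s < d / (2*K)"
    then have sK: "2 * s * K < d"
      using K by (simp add: field_simps)
    obtain \<tau> where \<tau>: "\<tau> \<in> {0<..<s}"
      and mvt: "f (x0 + s *\<^sub>R u + s *\<^sub>R w) - f (x0 + s *\<^sub>R u) - f (x0 + s *\<^sub>R w) + f x0
           = s * ((gradf (x0 + \<tau> *\<^sub>R u + s *\<^sub>R w) - gradf (x0 + \<tau> *\<^sub>R u)) \<bullet> u)"
      using second_difference_mvt[OF grad, of s x0 u w] s by blast
    define y1 where "y1 = x0 + \<tau> *\<^sub>R u + s *\<^sub>R w"
    define y2 where "y2 = x0 + \<tau> *\<^sub>R u"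
    have mvt': "f (x0 + s *\<^sub>R u + s *\<^sub>R w) - f (x0 + s *\<^sub>R u) - f (x0 + s *\<^sub>R w) + f x0
        = s * ((gradf y1 - gradf y2) \<bullet> u)"
      unfolding mvt y1_def y2_def ..
    have tu: "norm (\<tau> *\<^sub>R u) \<le> s * K"
      using \<tau> K s mult_mono[of \<tau> s "norm u" K] by simp
    have sw: "norm (s *\<^sub>R w) \<le> s * K"
      using K s mult_left_mono[of "norm w" K s] by simp
    have "norm (y1 - x0) \<le> 2 * s * K"
      using norm_triangle_ineq[of "\<tau> *\<^sub>R u" "s *\<^sub>R w"] tu sw by (simp add: y1_def add.assoc)
    moreover have "norm (y2 - x0) \<le> 2 * s * K"
      using \<tau> K s mult_mono[of \<tau> "2 * s" "norm u" K] by (simp add: y2_def)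
    ultimately have "norm (gradf y1 - gradf y2 - H *v (y1 - y2)) \<le> 2 * e1 * (2 * s * K)"
      using sK by (rule incr)
    moreover have "2 * e1 * (2 * s * K) = e * s / K"
      using K by (simp add: e1_def power2_eq_square field_simps)
    moreover have "H *v (y1 - y2) = s *\<^sub>R (H *v w)"
      by (simp add: y1_def y2_def matrix_vector_mult_scaleR)
    ultimately have nb: "norm (gradf y1 - gradf y2 - s *\<^sub>R (H *v w)) \<le> e * s / K"
      by simp
    have "\<bar>(gradf y1 - gradf y2) \<bullet> u - s * (u \<bullet> (H *v w))\<bar>
        = \<bar>(gradf y1 - gradf y2 - s *\<^sub>R (H *v w)) \<bullet> u\<bar>"
      by (simp add: inner_diff_left inner_commute[of u])
    also have "\<dots> \<le> norm (gradf y1 - gradf y2 - s *\<^sub>R (H *v w)) * norm u"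
      by (rule Cauchy_Schwarz_ineq2)
    also have "\<dots> \<le> (e * s / K) * K"
      using nb K e s by (intro mult_mono) auto
    finally have "\<bar>(gradf y1 - gradf y2) \<bullet> u - s * (u \<bullet> (H *v w))\<bar> \<le> e * s"
      using K by simp
    then have "s * \<bar>(gradf y1 - gradf y2) \<bullet> u - s * (u \<bullet> (H *v w))\<bar> \<le> e * s^2"
      using s by (simp add: power2_eq_square mult_left_mono mult.left_commute)
    moreover have "s * ((gradf y1 - gradf y2) \<bullet> u) - s^2 * (u \<bullet> (H *v w))
        = s * ((gradf y1 - gradf y2) \<bullet> u - s * (u \<bullet> (H *v w)))"
      by (simp add: power2_eq_square right_diff_distrib)
    ultimately show "\<bar>(f (x0 + s *\<^sub>R u + s *\<^sub>R w) - f (x0 + s *\<^sub>R u) - f (x0 + s *\<^sub>R w) + f x0)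
        - s^2 * (u \<bullet> (H *v w))\<bar> \<le> e * s^2"
      using s unfolding mvt' by (simp add: abs_mult)
  qed
qed

lemma hessian_symmetric:
  fixes f :: "real^'n::finite \<Rightarrow> real" and H :: "real^'n^'n"
  assumes grad: "\<And>x. (f has_derivative (\<lambda>h. gradf x \<bullet> h)) (at x)"
    and hess: "(gradf has_derivative (\<lambda>h. H *v h)) (at x0)"
  shows "u \<bullet> (H *v w) = w \<bullet> (H *v u)"
proof (rule ccontr)
  assume ne: "u \<bullet> (H *v w) \<noteq> w \<bullet> (H *v u)"
  define e where "e = \<bar>u \<bullet> (H *v w) - w \<bullet> (H *v u)\<bar> / 3"
  have e: "e > 0"
    using ne by (simp add: e_def)
  obtain d1 where d1: "d1 > 0" "\<And>s. 0 < s \<Longrightarrow> s < d1 \<Longrightarrow>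
     \<bar>(f (x0 + s *\<^sub>R u + s *\<^sub>R w) - f (x0 + s *\<^sub>R u) - f (x0 + s *\<^sub>R w) + f x0)
        - s^2 * (u \<bullet> (H *v w))\<bar> \<le> e * s^2"
    using second_difference_approx[OF grad hess e, of u w] by blast
  obtain d2 where d2: "d2 > 0" "\<And>s. 0 < s \<Longrightarrow> s < d2 \<Longrightarrow>
     \<bar>(f (x0 + s *\<^sub>R w + s *\<^sub>R u) - f (x0 + s *\<^sub>R w) - f (x0 + s *\<^sub>R u) + f x0)
        - s^2 * (w \<bullet> (H *v u))\<bar> \<le> e * s^2"
    using second_difference_approx[OF grad hess e, of w u] by blast
  define s where "s = min d1 d2 / 2"
  have s: "0 < s" "s < d1" "s < d2"
    using d1 d2 by (auto simp: s_def)
  have "\<bar>s^2 * (u \<bullet> (H *v w)) - s^2 * (w \<bullet> (H *v u))\<bar> \<le> 2 * e * s^2"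
    using d1(2)[OF s(1,2)] d2(2)[OF s(1,3)] by (simp add: algebra_simps)
  then have "s^2 * \<bar>u \<bullet> (H *v w) - w \<bullet> (H *v u)\<bar> \<le> s^2 * (2 * e)"
    by (metis abs_mult abs_power2 mult.commute right_diff_distrib)
  then have "\<bar>u \<bullet> (H *v w) - w \<bullet> (H *v u)\<bar> \<le> 2 * e"
    using s by (simp add: mult_le_cancel_left)
  then show False
    using e by (simp add: e_def)
qed

lemma norm_derivative_le_lipschitz:
  fixes g :: "'a::real_normed_vector \<Rightarrow> 'b::real_normed_vector"
  assumes deriv: "(g has_derivative g') (at x)"
    and lip: "\<And>y z. norm (g y - g z) \<le> L * norm (y - z)"
  shows "norm (g' v) \<le> L * norm v"
proof (cases "v = 0")
  case True
  then show ?thesis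
    using has_derivative_linear[OF deriv] by (simp add: linear_0)
next
  case False
  have lin: "linear g'"
    using deriv by (rule has_derivative_linear)
  show ?thesis
  proof (rule field_le_epsilon)
    fix d :: real
    assume d: "d > 0"
    obtain \<delta> where \<delta>: "\<delta> > 0" and approx: "\<And>y. norm (y - x) < \<delta> \<Longrightarrow>
        norm (g y - g x - g' (y - x)) \<le> d / norm v * norm (y - x)"
      using deriv[unfolded has_derivative_at_alt] d False
      by (metis divide_pos_pos zero_less_norm_iff)
    define s where "s = \<delta> / (2 * norm v)"
    have s: "s > 0" and "norm (s *\<^sub>R v) < \<delta>"
      using \<delta> False by (simp_all add: s_def)
    then have "norm (g (x + s *\<^sub>R v) - g x - s *\<^sub>R g' v) \<le> d * s"
      using approx[of "x + s *\<^sub>R v"] False by (simp add: linear_scale[OF lin])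
    moreover have "norm (s *\<^sub>R g' v) - norm (g (x + s *\<^sub>R v) - g x)
        \<le> norm (g (x + s *\<^sub>R v) - g x - s *\<^sub>R g' v)"
      by (metis norm_minus_commute norm_triangle_ineq2)
    moreover have "norm (g (x + s *\<^sub>R v) - g x) \<le> L * (s * norm v)"
      using lip[of "x + s *\<^sub>R v" x] s by simp
    ultimately have "s * norm (g' v) \<le> s * (L * norm v + d)"
      using s by (simp add: algebra_simps)
    then show "norm (g' v) \<le> L * norm v + d"
      using s by simp
  qed
qed

section \<open>Symmetric matrices\<close>

lemma symmetric_matrix_eigenvalues_finite:
  fixes H :: "real^'n::finite^'n"
  assumes sym: "\<And>u w. u \<bullet> (H *v w) = w \<bullet> (H *v u)"
  shows "finite {c. \<exists>v. v \<noteq> 0 \<and> H *v v = c *\<^sub>R v}"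
proof -
  define E where "E = {c. \<exists>v. v \<noteq> 0 \<and> H *v v = c *\<^sub>R v}"
  define ev where "ev c = (SOME v. v \<noteq> 0 \<and> H *v v = c *\<^sub>R v)" for c
  have ev: "ev c \<noteq> 0 \<and> H *v ev c = c *\<^sub>R ev c" if "c \<in> E" for c
    using that unfolding E_def ev_def by (metis (mono_tags, lifting) mem_Collect_eq someI)
  have orth: "ev c \<bullet> ev d = 0" if "c \<in> E" "d \<in> E" "c \<noteq> d" for c d
  proof -
    have "c * (ev d \<bullet> ev c) = ev d \<bullet> (H *v ev c)"
      using ev[OF that(1)] by simp
    also have "\<dots> = ev c \<bullet> (H *v ev d)"
      by (rule sym)
    also have "\<dots> = d * (ev c \<bullet> ev d)"
      using ev[OF that(2)] by simp
    finally show ?thesis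
      using that(3) by (simp add: inner_commute)
  qed
  have inj: "inj_on ev E"
  proof (rule inj_onI)
    fix c d
    assume cd: "c \<in> E" "d \<in> E" "ev c = ev d"
    show "c = d"
    proof (rule ccontr)
      assume "c \<noteq> d"
      then have "ev c \<bullet> ev c = 0"
        using orth[OF cd(1,2)] cd(3) by simp
      then show False
        using ev[OF cd(1)] by simp
    qed
  qed
  have "pairwise orthogonal (ev ` E)"
    unfolding pairwise_def orthogonal_def using orth by fastforce
  moreover have "0 \<notin> ev ` E"
    using ev by force
  ultimately have "independent (ev ` E)"
    by (rule pairwise_orthogonal_independent)
  then have "finite (ev ` E)"
    using independent_bound by blast
  then show ?thesis
    using finite_imageD[OF _ inj] unfolding E_def by blast
qed

lemma rayleigh_quotient_attains_min:
  fixes H :: "real^'n::finite^'n"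
  obtains u where "norm u = 1" "\<And>w. (u \<bullet> (H *v u)) * (w \<bullet> w) \<le> w \<bullet> (H *v w)"
proof -
  define q where "q w = w \<bullet> (H *v w)" for w
  have "sphere (0::real^'n) 1 \<noteq> {}"
    by (metis (no_types) norm_axis_1 mem_sphere_0 empty_iff)
  moreover have "continuous_on (sphere 0 1) q"
    unfolding q_def by (intro continuous_intros)
  ultimately obtain u where u: "u \<in> sphere 0 1" and min: "\<And>y. y \<in> sphere 0 1 \<Longrightarrow> q u \<le> q y"
    using continuous_attains_inf[OF compact_sphere] by blast
  have "q u * (w \<bullet> w) \<le> q w" for w
  proof (cases "w = 0")
    case False
    then have "q u \<le> q (w /\<^sub>R norm w)"
      by (intro min) simp
    also have "q (w /\<^sub>R norm w) = q w / (norm w)^2"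
      by (simp add: q_def power2_eq_square divide_inverse matrix_vector_mult_scaleR)
    finally show ?thesis
      using False by (simp add: field_simps power2_norm_eq_inner)
  qed (simp add: q_def)
  with u show ?thesis
    by (intro that) (auto simp: q_def)
qed

text \<open>A minimiser \<open>u\<close> of the Rayleigh quotient is an eigenvector: perturbing \<open>u\<close> in the direction
  of the residual \<open>r = H u - m u\<close>, which is orthogonal to \<open>u\<close>, decreases the quotient to first
  order unless \<open>r = 0\<close>.\<close>

lemma rayleigh_minimiser_eigenvector:
  fixes H :: "real^'n::finite^'n"
  assumes sym: "\<And>u w. u \<bullet> (H *v w) = w \<bullet> (H *v u)"
    and u: "norm u = 1"
    and min: "\<And>w. (u \<bullet> (H *v u)) * (w \<bullet> w) \<le> w \<bullet> (H *v w)"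
  shows "H *v u = (u \<bullet> (H *v u)) *\<^sub>R u"
proof -
  define m where "m = u \<bullet> (H *v u)"
  define r where "r = H *v u - m *\<^sub>R u"
  have uu: "u \<bullet> u = 1"
    using u by (simp add: norm_eq_1)
  have ru: "u \<bullet> r = 0"
    by (simp add: r_def inner_diff_right uu m_def)
  have rH: "r \<bullet> (H *v u) = r \<bullet> r"
    using ru by (simp add: r_def inner_diff_left inner_diff_right inner_commute)
  have expand: "(u + t *\<^sub>R r) \<bullet> (H *v (u + t *\<^sub>R r)) - m * ((u + t *\<^sub>R r) \<bullet> (u + t *\<^sub>R r))
      = 2*t*(r \<bullet> r) + t^2 * (r \<bullet> (H *v r) - m * (r \<bullet> r))" for t
  proof -
    have "(u + t *\<^sub>R r) \<bullet> (H *v (u + t *\<^sub>R r))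
        = m + t * (u \<bullet> (H *v r)) + t * (r \<bullet> (H *v u)) + t^2 * (r \<bullet> (H *v r))"
      by (simp add: m_def matrix_vector_right_distrib matrix_vector_mult_scaleR inner_add_left
          inner_add_right power2_eq_square algebra_simps)
    also have "u \<bullet> (H *v r) = r \<bullet> (H *v u)"
      by (rule sym)
    moreover have "(u + t *\<^sub>R r) \<bullet> (u + t *\<^sub>R r) = 1 + t^2 * (r \<bullet> r)"
      using ru uu by (simp add: inner_add_left inner_add_right inner_commute power2_eq_square)
    ultimately show ?thesis
      using rH by (simp add: algebra_simps)
  qed
  have "r = 0"
  proof (rule ccontr)
    assume "r \<noteq> 0"
    then have rr: "r \<bullet> r > 0"
      by simp
    define K where "K = \<bar>r \<bullet> (H *v r) - m * (r \<bullet> r)\<bar> + 1"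
    define t where "t = - (r \<bullet> r) / K"
    have K: "K \<ge> 1"
      by (simp add: K_def)
    have t: "t < 0"
      using rr K by (simp add: t_def)
    have "0 \<le> 2*t*(r \<bullet> r) + t^2 * (r \<bullet> (H *v r) - m * (r \<bullet> r))"
      using min[of "u + t *\<^sub>R r"] expand[of t] by (simp add: m_def)
    also have "\<dots> \<le> 2*t*(r \<bullet> r) + t^2 * K"
      by (intro add_left_mono mult_left_mono) (auto simp: K_def)
    also have "\<dots> = t * (r \<bullet> r)"
      using K by (simp add: t_def power2_eq_square field_simps)
    finally show False
      using mult_neg_pos[OF t rr] by linarith
  qed
  then show ?thesis
    by (simp add: r_def m_def)
qed

lemma lambda_min_neg_imp_eigenvector:
  fixes H :: "real^'n::finite^'n"
  assumes sym: "\<And>u w. u \<bullet> (H *v w) = w \<bullet> (H *v u)"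
    and neg: "lambda_min H < 0"
  obtains c v where "c < 0" "norm v = 1" "H *v v = c *\<^sub>R v"
proof -
  let ?E = "{c. \<exists>v. v \<noteq> 0 \<and> H *v v = c *\<^sub>R v}"
  obtain u where u: "norm u = 1" "\<And>w. (u \<bullet> (H *v u)) * (w \<bullet> w) \<le> w \<bullet> (H *v w)"
    using rayleigh_quotient_attains_min by blast
  have "u \<noteq> 0"
    using u(1) by auto
  then have "u \<bullet> (H *v u) \<in> ?E"
    using rayleigh_minimiser_eigenvector[OF sym u] by blast
  then have "Min ?E \<in> ?E"
    using symmetric_matrix_eigenvalues_finite[OF sym] by (intro Min_in) auto
  then obtain v where "v \<noteq> 0" "H *v v = lambda_min H *\<^sub>R v"
    unfolding lambda_min_def by blast
  then show ?thesis
    using neg by (intro that[of "lambda_min H" "v /\<^sub>R norm v"]) (auto simp: matrix_vector_mult_scaleR)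
qed

lemma matrix_bounded_below_orthogonal_kernel:
  fixes H :: "real^'n::finite^'m::finite"
  obtains \<sigma> where "\<sigma> > 0"
    "\<And>z. (\<And>a. H *v a = 0 \<Longrightarrow> a \<bullet> z = 0) \<Longrightarrow> \<sigma> * norm z \<le> norm (H *v z)"
proof -
  define T where "T = sphere 0 1 \<inter> (\<Inter>a\<in>{a. H *v a = 0}. {z. a \<bullet> z = 0})"
  have "compact T"
    unfolding T_def by (intro compact_Int_closed compact_sphere closed_INT) (auto intro: closed_hyperplane)
  obtain \<sigma> where \<sigma>: "\<sigma> > 0" "\<And>z. z \<in> T \<Longrightarrow> \<sigma> \<le> norm (H *v z)"
  proof (cases "T = {}")
    case False
    have "continuous_on T (\<lambda>z. norm (H *v z))"
      by (intro continuous_intros)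
    then obtain z0 where z0: "z0 \<in> T" "\<And>z. z \<in> T \<Longrightarrow> norm (H *v z0) \<le> norm (H *v z)"
      using continuous_attains_inf[OF \<open>compact T\<close> False] by blast
    have "H *v z0 \<noteq> 0"
    proof
      assume "H *v z0 = 0"
      then have "z0 \<bullet> z0 = 0"
        using z0(1) by (auto simp: T_def)
      then show False
        using z0(1) by (auto simp: T_def)
    qed
    then show ?thesis
      using that[of "norm (H *v z0)"] z0 by auto
  qed (use that[of 1] in auto)
  show ?thesis
  proof (rule that[OF \<sigma>(1)])
    fix z
    assume z: "\<And>a. H *v a = 0 \<Longrightarrow> a \<bullet> z = 0"
    show "\<sigma> * norm z \<le> norm (H *v z)"
    proof (cases "z = 0")
      case False
      then have "z /\<^sub>R norm z \<in> T"
        using z by (auto simp: T_def)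
      then have "\<sigma> \<le> norm (H *v (z /\<^sub>R norm z))"
        by (rule \<sigma>(2))
      also have "\<dots> = norm (H *v z) / norm z"
        by (simp add: matrix_vector_mult_scaleR divide_inverse)
      finally show ?thesis
        using False by (simp add: field_simps)
    qed simp
  qed
qed

lemma symmetric_quadratic_form_le_norm_image:
  fixes H :: "real^'n::finite^'n"
  assumes sym: "\<And>u w. u \<bullet> (H *v w) = w \<bullet> (H *v u)"
  obtains C where "C > 0" "\<And>e. \<bar>e \<bullet> (H *v e)\<bar> \<le> C * (norm (H *v e))^2"
proof -
  define K where "K = {a. H *v a = 0}"
  have "subspace K"
    unfolding K_def subspace_def by (simp add: matrix_vector_right_distrib matrix_vector_mult_scaleR)
  obtain \<sigma> where \<sigma>: "\<sigma> > 0"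
    "\<And>z. (\<And>a. H *v a = 0 \<Longrightarrow> a \<bullet> z = 0) \<Longrightarrow> \<sigma> * norm z \<le> norm (H *v z)"
    using matrix_bounded_below_orthogonal_kernel by blast
  show ?thesis
  proof (rule that[of "1/\<sigma>"])
    show "1/\<sigma> > 0"
      using \<sigma> by simp
    fix e
    obtain y z where yz: "y \<in> span K" "\<And>w. w \<in> span K \<Longrightarrow> orthogonal z w" "e = y + z"
      using orthogonal_subspace_decomp_exists[of K e] by blast
    have "y \<in> K"
      using yz(1) \<open>subspace K\<close> by (metis span_eq_iff)
    then have Hy: "H *v y = 0"
      by (simp add: K_def)
    have "a \<bullet> z = 0" if "H *v a = 0" for a
      using yz(2)[of a] that span_base[of a K] by (simp add: K_def orthogonal_def inner_commute)
    then have zb: "\<sigma> * norm z \<le> norm (H *v z)"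
      by (rule \<sigma>(2))
    have He: "H *v e = H *v z"
      using Hy yz(3) by (simp add: matrix_vector_right_distrib)
    have "e \<bullet> (H *v e) = z \<bullet> (H *v z)"
      using sym[of y z] He Hy yz(3) by (simp add: inner_add_left)
    then have "\<bar>e \<bullet> (H *v e)\<bar> \<le> norm z * norm (H *v z)"
      by (simp add: Cauchy_Schwarz_ineq2)
    also have "\<dots> \<le> (norm (H *v z) / \<sigma>) * norm (H *v z)"
      using zb \<sigma> by (intro mult_right_mono) (auto simp: field_simps)
    finally show "\<bar>e \<bullet> (H *v e)\<bar> \<le> 1/\<sigma> * (norm (H *v e))^2"
      using He by (simp add: power2_eq_square)
  qed
qed

section \<open>Lipschitz maps and null sets\<close>

lemma funpow_lipschitz:
  fixes g :: "'a::real_normed_vector \<Rightarrow> 'a"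
  assumes lip: "\<And>x y. norm (g x - g y) \<le> K * norm (x - y)" and "K \<ge> 0"
  shows "norm ((g ^^ N) x - (g ^^ N) y) \<le> K^N * norm (x - y)"
proof (induction N)
  case (Suc N)
  have "norm ((g ^^ Suc N) x - (g ^^ Suc N) y) \<le> K * norm ((g ^^ N) x - (g ^^ N) y)"
    using lip by simp
  also have "\<dots> \<le> K * (K^N * norm (x - y))"
    using Suc \<open>K \<ge> 0\<close> by (intro mult_left_mono) auto
  finally show ?case
    by simp
qed simp

lemma negligible_lipschitz_image:
  fixes g :: "'a::euclidean_space \<Rightarrow> 'a"
  assumes "negligible S"
    and lip: "\<And>x y. x \<in> S \<Longrightarrow> y \<in> S \<Longrightarrow> norm (g x - g y) \<le> M * norm (x - y)"
  shows "negligible (g ` S)"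
  using order_refl assms(1)
proof (rule negligible_locally_Lipschitz_image)
  show "\<exists>T B. open T \<and> x \<in> T \<and> (\<forall>y\<in>S \<inter> T. norm (g y - g x) \<le> B * norm (y - x))"
    if "x \<in> S" for x
    using lip[OF _ that] by (intro exI[of _ UNIV] exI[of _ M]) auto
qed

lemma negligible_if_lipschitz_inverse:
  fixes \<pi> :: "'a::euclidean_space \<Rightarrow> 'a"
  assumes "negligible (\<pi> ` W)"
    and bound: "\<And>x y. x \<in> W \<Longrightarrow> y \<in> W \<Longrightarrow> norm (x - y) \<le> M * norm (\<pi> x - \<pi> y)"
  shows "negligible W"
proof -
  have "inj_on \<pi> W"
  proof (rule inj_onI)
    fix x y
    assume "x \<in> W" "y \<in> W" "\<pi> x = \<pi> y"
    then have "norm (x - y) \<le> 0"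
      using bound[of x y] by simp
    then show "x = y"
      by simp
  qed
  then have "W = inv_into W \<pi> ` \<pi> ` W"
    by (simp add: inv_into_image_cancel)
  also have "negligible \<dots>"
  proof (rule negligible_lipschitz_image[OF assms(1)])
    fix a b
    assume "a \<in> \<pi> ` W" "b \<in> \<pi> ` W"
    then show "norm (inv_into W \<pi> a - inv_into W \<pi> b) \<le> M * norm (a - b)"
      using bound[of "inv_into W \<pi> a" "inv_into W \<pi> b"] by (simp add: inv_into_into f_inv_into_f)
  qed
  finally show ?thesis .
qed

section \<open>Arithmetic of the one-sweep gain\<close>

text \<open>In the next two lemmas \<open>X\<close> is the distance of two points near the saddle, \<open>A\<close> the length of
  the path traced by their difference during one sweep, \<open>R\<close> the accumulated linearisation error
  and \<open>G\<close> the increase of the cone form; the hypotheses are the estimates of \<open>sweep_gain_bounds\<close>.\<close>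

lemma start_distance_le_path_length_arith:
  fixes A R X \<gamma> C1 K1 p \<epsilon> :: real
  assumes "A \<ge> 0" "R \<ge> 0" "X \<ge> 0" "C1 > 0" "\<gamma> > 0"
    and start: "\<gamma>*X^2 \<le> C1*(K1*A + R)^2"
    and residual: "R \<le> p*\<epsilon>*(X + A)"
    and small: "4*C1*p^2*\<epsilon>^2 \<le> \<gamma>/2"
  shows "X^2 \<le> (4*C1*K1^2/\<gamma> + 1) * A^2"
proof -
  have R2: "R^2 \<le> 2*p^2*\<epsilon>^2*(X^2 + A^2)"
  proof -
    have "R^2 \<le> (p*\<epsilon>*(X + A))^2"
      using residual \<open>R \<ge> 0\<close> by (intro power_mono) auto
    also have "\<dots> = p^2*\<epsilon>^2*(X + A)^2"
      by (simp add: power_mult_distrib)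
    also have "\<dots> \<le> p^2*\<epsilon>^2*(2*(X^2 + A^2))"
      using zero_le_power2[of "X - A"]
      by (intro mult_left_mono) (simp_all add: power2_sum power2_diff algebra_simps)
    finally show ?thesis
      by (simp add: algebra_simps)
  qed
  have "(K1*A + R)^2 + (K1*A - R)^2 = 2*K1^2*A^2 + 2*R^2"
    by (simp add: power2_sum power2_diff power_mult_distrib)
  then have "(K1*A + R)^2 \<le> 2*K1^2*A^2 + 2*R^2"
    using zero_le_power2[of "K1*A - R"] by linarith
  then have "\<gamma>*X^2 \<le> C1*(2*K1^2*A^2 + 2*R^2)"
    using start \<open>C1 > 0\<close> by (meson mult_left_mono less_imp_le order_trans)
  also have "\<dots> \<le> C1*(2*K1^2*A^2 + 2*(2*p^2*\<epsilon>^2*(X^2 + A^2)))"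
    using R2 \<open>C1 > 0\<close> by (intro mult_left_mono add_left_mono) auto
  also have "\<dots> = 2*C1*K1^2*A^2 + (4*C1*p^2*\<epsilon>^2)*(X^2 + A^2)"
    by (simp add: algebra_simps)
  also have "\<dots> \<le> 2*C1*K1^2*A^2 + (\<gamma>/2)*(X^2 + A^2)"
    using small by (intro add_left_mono mult_right_mono) auto
  finally have "(\<gamma>/2)*X^2 \<le> (2*C1*K1^2 + \<gamma>/2)*A^2"
    by (simp add: algebra_simps)
  then show ?thesis
    using \<open>\<gamma> > 0\<close> by (simp add: field_simps)
qed

lemma cone_form_gain_arith:
  fixes A R X G \<gamma> c1 C1 K1 p \<epsilon> :: real
  defines "D \<equiv> 4*C1*K1^2/\<gamma> + 1" and "\<theta> \<equiv> c1/(8*(4*C1*K1^2 + 1))"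
  assumes nonneg: "A \<ge> 0" "R \<ge> 0" "X \<ge> 0" "p \<ge> 0" "\<epsilon> \<ge> 0"
    and C1: "C1 > 0" and c1: "c1 > 0"
    and gain: "G \<ge> c1*A^2 - 2*A*R - 2*\<gamma>*X*A - \<gamma>*A^2"
    and start: "\<gamma>*X^2 \<le> C1*(K1*A + R)^2"
    and residual: "R \<le> p*\<epsilon>*(X + A)"
    and \<gamma>: "0 < \<gamma>" "\<gamma> \<le> 1" "\<gamma> \<le> c1/8" "\<gamma> \<le> c1*\<theta>/8"
    and \<epsilon>: "4*C1*p^2*\<epsilon>^2 \<le> \<gamma>/2" "p*\<epsilon>*(D + 3) \<le> c1/8"
  shows "G \<ge> c1/(2*D) * X^2"
proof -
  have D1: "D \<ge> 1"
    using C1 \<gamma> by (simp add: D_def)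
  have pos: "4*C1*K1^2 + 1 > 0"
    using C1 by (simp add: add_nonneg_pos)
  then have \<theta>: "\<theta> > 0"
    using c1 by (simp add: \<theta>_def)
  have \<theta>_eq: "\<theta>*(4*C1*K1^2 + 1) = c1/8"
    using pos unfolding \<theta>_def
    by (metis divide_divide_eq_left nonzero_mult_div_cancel_right order_less_irrefl times_divide_eq_left)
  have pe: "p*\<epsilon> \<ge> 0"
    using nonneg by simp
  have XD: "X^2 \<le> D*A^2"
    unfolding D_def
    using start_distance_le_path_length_arith[OF nonneg(1-3) C1 \<gamma>(1) start residual \<epsilon>(1)] .
  have t1: "2*A*R \<le> (c1/8)*A^2"
  proof -
    have "2*A*R \<le> 2*A*(p*\<epsilon>*(X + A))"
      using residual nonneg by (intro mult_left_mono) auto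
    also have "\<dots> = p*\<epsilon>*(2*X*A) + 2*p*\<epsilon>*A^2"
      by (simp add: algebra_simps power2_eq_square)
    also have "\<dots> \<le> p*\<epsilon>*(X^2 + A^2) + 2*p*\<epsilon>*A^2"
      using pe zero_le_power2[of "X - A"]
      by (intro add_right_mono mult_left_mono) (auto simp: power2_diff)
    also have "\<dots> \<le> p*\<epsilon>*(D*A^2 + A^2) + 2*p*\<epsilon>*A^2"
      using pe XD by (intro add_right_mono mult_left_mono) auto
    also have "\<dots> = p*\<epsilon>*(D + 3)*A^2"
      by (simp add: algebra_simps)
    also have "\<dots> \<le> (c1/8)*A^2"
      using \<epsilon>(2) by (intro mult_right_mono) auto
    finally show ?thesis .
  qed
  have t2: "2*\<gamma>*X*A \<le> \<gamma>*\<theta>*X^2 + (\<gamma>/\<theta>)*A^2"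
  proof -
    have "0 \<le> (sqrt \<theta> * X - A / sqrt \<theta>)^2"
      by simp
    also have "\<dots> = \<theta>*X^2 - 2*X*A + A^2/\<theta>"
      using \<theta> by (simp add: power2_diff power_mult_distrib power_divide)
    finally have "2*X*A \<le> \<theta>*X^2 + A^2/\<theta>"
      by simp
    then have "\<gamma>*(2*X*A) \<le> \<gamma>*(\<theta>*X^2 + A^2/\<theta>)"
      using \<gamma> by (intro mult_left_mono) auto
    then show ?thesis
      by (simp add: algebra_simps)
  qed
  have t2a: "\<gamma>*\<theta>*X^2 \<le> (c1/8)*A^2"
  proof -
    have "\<gamma>*\<theta>*X^2 \<le> \<gamma>*\<theta>*(D*A^2)"
      using XD \<gamma> \<theta> by (intro mult_left_mono) auto
    also have "\<dots> = \<theta>*(4*C1*K1^2 + \<gamma>)*A^2"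
      using \<gamma> by (simp add: D_def field_simps)
    also have "\<dots> \<le> \<theta>*(4*C1*K1^2 + 1)*A^2"
      using \<gamma> \<theta> by (intro mult_right_mono mult_left_mono) auto
    finally show ?thesis
      by (simp add: \<theta>_eq)
  qed
  have t2b: "(\<gamma>/\<theta>)*A^2 \<le> (c1/8)*A^2"
    using \<gamma>(4) \<theta> by (intro mult_right_mono) (auto simp: pos_divide_le_eq)
  have t3: "\<gamma>*A^2 \<le> (c1/8)*A^2"
    using \<gamma> by (intro mult_right_mono) auto
  have "c1/(2*D) * X^2 \<le> c1/(2*D) * (D*A^2)"
    using XD c1 D1 by (intro mult_left_mono) auto
  also have "\<dots> = (c1/2)*A^2"
    using D1 by (simp add: field_simps)
  also have "\<dots> \<le> G"
    using gain t1 t2 t2a t2b t3 by linarith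
  finally show ?thesis .
qed

lemma cone_parameters_exist:
  fixes c1 C1 K1 q \<gamma>0 :: real
  assumes c1: "c1 > 0" and C1: "C1 > 0" and q: "q \<ge> 1" and \<gamma>0: "\<gamma>0 > 0"
  obtains \<gamma> \<epsilon> where "0 < \<gamma>" "\<gamma> \<le> \<gamma>0" "\<gamma> \<le> 1" "\<gamma> \<le> c1/8"
    "\<gamma> \<le> c1 * (c1/(8*(4*C1*K1^2 + 1))) / 8"
    "\<epsilon> > 0" "4*C1*q^2*\<epsilon>^2 \<le> \<gamma>/2" "q*\<epsilon>*((4*C1*K1^2/\<gamma> + 1) + 3) \<le> c1/8"
proof -
  define \<theta> where "\<theta> = c1/(8*(4*C1*K1^2 + 1))"
  have \<theta>: "\<theta> > 0"
    using C1 c1 by (simp add: \<theta>_def add_nonneg_pos)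
  define \<gamma> where "\<gamma> = min (min 1 (c1/8)) (min (c1*\<theta>/8) \<gamma>0)"
  have \<gamma>: "0 < \<gamma>" "\<gamma> \<le> \<gamma>0" "\<gamma> \<le> 1" "\<gamma> \<le> c1/8" "\<gamma> \<le> c1*\<theta>/8"
    using c1 \<theta> \<gamma>0 by (auto simp: \<gamma>_def)
  define D where "D = 4*C1*K1^2/\<gamma> + 1"
  have D: "D \<ge> 1"
    using C1 \<gamma> by (simp add: D_def)
  define \<epsilon> where "\<epsilon> = min (min 1 (\<gamma>/(8*C1*q^2))) (c1/(8*q*(D + 3)))"
  have \<epsilon>: "\<epsilon> > 0" "\<epsilon> \<le> 1" "\<epsilon> \<le> \<gamma>/(8*C1*q^2)" "\<epsilon> \<le> c1/(8*q*(D + 3))"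
    using \<gamma> C1 q c1 D by (auto simp: \<epsilon>_def)
  have "4*C1*q^2*\<epsilon>^2 \<le> \<gamma>/2"
  proof -
    have "\<epsilon>^2 \<le> \<epsilon>"
      using \<epsilon> by (simp add: power2_eq_square mult_le_cancel_right1)
    then have "4*C1*q^2*\<epsilon>^2 \<le> 4*C1*q^2*\<epsilon>"
      using C1 by (intro mult_left_mono) auto
    also have "\<dots> \<le> 4*C1*q^2*(\<gamma>/(8*C1*q^2))"
      using \<epsilon> C1 by (intro mult_left_mono) auto
    also have "\<dots> = \<gamma>/2"
      using C1 q by (simp add: field_simps)
    finally show ?thesis .
  qed
  moreover have "q*\<epsilon>*(D + 3) \<le> c1/8"
  proof -
    have "q*\<epsilon>*(D + 3) \<le> q*(c1/(8*q*(D + 3)))*(D + 3)"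
      using \<epsilon> q D by (intro mult_right_mono mult_left_mono) auto
    also have "\<dots> = c1/8"
      using q D by (simp add: divide_simps)
    finally show ?thesis .
  qed
  ultimately show ?thesis
    using \<gamma> \<epsilon>(1) by (intro that[of \<gamma> \<epsilon>]) (simp_all add: D_def \<theta>_def)
qed

section \<open>The proximal block step\<close>

locale lipschitz_gradient_step =
  fixes f :: "real^'n::finite \<Rightarrow> real" and gradf :: "real^'n \<Rightarrow> real^'n" and L \<alpha> :: real
  assumes grad: "\<And>x. (f has_derivative (\<lambda>h. gradf x \<bullet> h)) (at x)"
    and L_pos: "L > 0"
    and lip: "\<And>x y. norm (gradf x - gradf y) \<le> L * norm (x - y)"
    and step_pos: "0 < \<alpha>" and step_small: "\<alpha> * L < 1"
begin

abbreviation prox_objective :: "'n set \<Rightarrow> real^'n \<Rightarrow> real^'n \<Rightarrow> real" where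
  "prox_objective S x z \<equiv> f z + block_dist2 S z x / (2*\<alpha>)"

lemma implicit_block_step_unique: "\<exists>!y. x - \<alpha> *\<^sub>R block_proj S (gradf y) = y"
proof (rule banach_fix_type)
  show "0 \<le> \<alpha> * L" "\<alpha> * L < 1"
    using step_pos L_pos step_small by simp_all
  show "\<forall>y y'. dist (x - \<alpha> *\<^sub>R block_proj S (gradf y)) (x - \<alpha> *\<^sub>R block_proj S (gradf y'))
      \<le> (\<alpha> * L) * dist y y'"
  proof (intro allI)
    fix y y'
    have "dist (x - \<alpha> *\<^sub>R block_proj S (gradf y)) (x - \<alpha> *\<^sub>R block_proj S (gradf y'))
        = \<alpha> * norm (block_proj S (gradf y - gradf y'))"
      using step_pos by (simp add: dist_norm block_proj_diff norm_minus_commute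
          flip: scaleR_diff_right)
    also have "\<dots> \<le> \<alpha> * (L * dist y y')"
      using norm_block_proj_le[of S "gradf y - gradf y'"] lip[of y y'] step_pos
      by (intro mult_left_mono) (auto simp: dist_norm)
    finally show "dist (x - \<alpha> *\<^sub>R block_proj S (gradf y)) (x - \<alpha> *\<^sub>R block_proj S (gradf y'))
        \<le> (\<alpha> * L) * dist y y'"
      by simp
  qed
qed

lemma prox_objective_gap:
  assumes y: "x - \<alpha> *\<^sub>R block_proj S (gradf y) = y" and z: "\<forall>i. i \<notin> S \<longrightarrow> z$i = x$i"
  shows "prox_objective S x z - prox_objective S x y \<ge> (1/(2*\<alpha>) - L/2) * (norm (z - y))^2"
proof -
  define g where "g = gradf y"
  define w where "w = z - y"
  have yi: "y$i = x$i - \<alpha> * (if i \<in> S then g$i else 0)" for i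
    using arg_cong[OF y[symmetric], of "\<lambda>v. v$i"] by (simp add: g_def)
  have w0: "i \<notin> S \<Longrightarrow> w$i = 0" for i
    using z yi by (simp add: w_def)
  have gw: "g \<bullet> w = (\<Sum>i\<in>S. g$i * w$i)"
    unfolding inner_vec_def inner_real_def by (rule sum.mono_neutral_right) (auto simp: w0)
  have nw: "(norm w)^2 = (\<Sum>i\<in>S. (w$i)^2)"
    unfolding power2_norm_eq_inner inner_vec_def inner_real_def
    by (rule sum.mono_neutral_cong_right) (auto simp: w0 power2_eq_square)
  have "block_dist2 S z x - block_dist2 S y x = (\<Sum>i\<in>S. (w$i)^2 - 2*\<alpha> * (g$i * w$i))"
    unfolding block_dist2_def sum_subtractf[symmetric]
    by (rule sum.cong) (auto simp: w_def yi power2_eq_square algebra_simps)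
  also have "\<dots> = (norm w)^2 - 2*\<alpha>*(g \<bullet> w)"
    by (simp add: nw gw sum_subtractf sum_distrib_left)
  finally have "block_dist2 S z x / (2*\<alpha>) - block_dist2 S y x / (2*\<alpha>) = (norm w)^2/(2*\<alpha>) - g \<bullet> w"
    using step_pos by (simp add: field_simps diff_divide_distrib[symmetric])
  moreover have "f z \<ge> f y + g \<bullet> w - L/2 * (norm w)^2"
    using lipschitz_gradient_lower_bound[OF grad lip] by (simp add: g_def w_def)
  ultimately show ?thesis by (simp add: w_def[symmetric] algebra_simps)
qed

text \<open>Since \<open>\<alpha> < 1/L\<close>, the block objective is strongly convex, so its unique minimiser is the
  unique solution of the implicit (backward) gradient step.\<close>

lemma block_step_iff: "block_step f \<alpha> S x = y \<longleftrightarrow> x - \<alpha> *\<^sub>R block_proj S (gradf y) = y"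
proof -
  obtain y0 where y0: "x - \<alpha> *\<^sub>R block_proj S (gradf y0) = y0"
    and unique: "\<And>y. x - \<alpha> *\<^sub>R block_proj S (gradf y) = y \<Longrightarrow> y = y0"
    using implicit_block_step_unique[of x S] by blast
  have convex: "1/(2*\<alpha>) - L/2 > 0"
    using step_small step_pos by (simp add: field_simps)
  have off: "\<forall>i. i \<notin> S \<longrightarrow> y0$i = x$i"
    by (subst y0[symmetric]) simp
  have "block_step f \<alpha> S x = y0"
    unfolding block_step_def
  proof (rule the_equality)
    show "(\<forall>i. i \<notin> S \<longrightarrow> y0$i = x$i) \<and>
        (\<forall>z. (\<forall>i. i \<notin> S \<longrightarrow> z$i = x$i) \<longrightarrow> prox_objective S x y0 \<le> prox_objective S x z)"
    proof (intro conjI allI impI)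
      fix z
      assume z: "\<forall>i. i \<notin> S \<longrightarrow> z$i = x$i"
      have "0 \<le> (1/(2*\<alpha>) - L/2) * (norm (z - y0))^2"
        using convex by simp
      also have "\<dots> \<le> prox_objective S x z - prox_objective S x y0"
        by (rule prox_objective_gap[OF y0 z])
      finally show "prox_objective S x y0 \<le> prox_objective S x z"
        by simp
    qed (use off in blast)
  next
    fix y'
    assume y': "(\<forall>i. i \<notin> S \<longrightarrow> y'$i = x$i) \<and>
        (\<forall>z. (\<forall>i. i \<notin> S \<longrightarrow> z$i = x$i) \<longrightarrow> prox_objective S x y' \<le> prox_objective S x z)"
    have "(1/(2*\<alpha>) - L/2) * (norm (y' - y0))^2 \<le> prox_objective S x y' - prox_objective S x y0"
      using y' by (intro prox_objective_gap[OF y0]) blast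
    also have "\<dots> \<le> 0"
      using y' off by simp
    finally have "(1/(2*\<alpha>) - L/2) * (norm (y' - y0))^2 \<le> 0" .
    with convex show "y' = y0"
      by (simp add: mult_le_0_iff)
  qed
  then show ?thesis
    using y0 unique by metis
qed

lemma block_step_implicit:
  "block_step f \<alpha> S x = x - \<alpha> *\<^sub>R block_proj S (gradf (block_step f \<alpha> S x))"
  using block_step_iff[of S x "block_step f \<alpha> S x"] by simp

lemma block_step_critical: "gradf z = 0 \<Longrightarrow> block_step f \<alpha> S z = z"
  by (subst block_step_iff) (simp add: vec_eq_iff)

lemma block_step_lipschitz:
  "norm (block_step f \<alpha> S x - block_step f \<alpha> S x') \<le> norm (x - x') / (1 - \<alpha> * L)"
proof -
  let ?y = "block_step f \<alpha> S x" and ?y' = "block_step f \<alpha> S x'"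
  have "norm (?y - ?y') = norm ((x - x') - \<alpha> *\<^sub>R block_proj S (gradf ?y - gradf ?y'))"
    by (subst (1 2) block_step_implicit) (simp add: block_proj_diff algebra_simps)
  also have "\<dots> \<le> norm (x - x') + \<alpha> * norm (block_proj S (gradf ?y - gradf ?y'))"
    using step_pos norm_triangle_ineq4 by (metis abs_of_pos norm_scaleR)
  also have "\<dots> \<le> norm (x - x') + \<alpha> * (L * norm (?y - ?y'))"
    using norm_block_proj_le[of S "gradf ?y - gradf ?y'"] lip[of ?y ?y'] step_pos
    by (intro add_left_mono mult_left_mono) auto
  finally have "(1 - \<alpha> * L) * norm (?y - ?y') \<le> norm (x - x')"
    by (simp add: algebra_simps)
  then show ?thesis
    using step_small by (simp add: field_simps)
qed

definition block_undo :: "'n set \<Rightarrow> real^'n \<Rightarrow> real^'n" where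
  "block_undo S y = y + \<alpha> *\<^sub>R block_proj S (gradf y)"

lemma block_undo_block_step: "block_undo S (block_step f \<alpha> S x) = x"
  using block_step_implicit[of S x] unfolding block_undo_def by (metis diff_add_cancel)

lemma block_undo_lipschitz: "norm (block_undo S y - block_undo S y') \<le> (1 + \<alpha> * L) * norm (y - y')"
proof -
  have "norm (block_undo S y - block_undo S y')
      = norm ((y - y') + \<alpha> *\<^sub>R block_proj S (gradf y - gradf y'))"
    by (simp add: block_undo_def block_proj_diff algebra_simps)
  also have "\<dots> \<le> norm (y - y') + \<alpha> * norm (block_proj S (gradf y - gradf y'))"
    using step_pos norm_triangle_ineq by (metis abs_of_pos norm_scaleR)
  also have "\<dots> \<le> norm (y - y') + \<alpha> * (L * norm (y - y'))"
    using norm_block_proj_le[of S "gradf y - gradf y'"] lip[of y y'] step_pos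
    by (intro add_left_mono mult_left_mono) auto
  finally show ?thesis by (simp add: algebra_simps)
qed

end

section \<open>Perturbed linear sweeps\<close>

lemma norm_diff3_le: "norm (a - b - c) \<le> norm a + norm b + norm (c::'a::real_normed_vector)"
  using norm_triangle_ineq4[of "a - b" c] norm_triangle_ineq4[of a b] by linarith

text \<open>The difference \<open>e\<close> of two PBCD trajectories near a critical point, after \<open>j\<close> of the \<open>p\<close>
  block steps: an implicit block sweep for the quadratic \<open>v \<mapsto> v\<cdot>Hv/2\<close>, perturbed by residuals
  \<open>r j\<close> that are small relative to the iterates.\<close>

locale perturbed_linear_sweep =
  fixes H :: "real^'n::finite^'n" and L \<alpha> \<epsilon> :: real and p :: nat
    and blocks :: "nat \<Rightarrow> 'n set" and e r :: "nat \<Rightarrow> real^'n"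
  assumes sym: "\<And>u w. u \<bullet> (H *v w) = w \<bullet> (H *v u)"
    and norm_H_le: "\<And>w. norm (H *v w) \<le> L * norm w"
    and norm_le_blocks: "\<And>w. norm w \<le> (\<Sum>j<p. norm (block_proj (blocks j) w))"
    and step: "\<And>j. j < p \<Longrightarrow> e (Suc j) = e j - \<alpha> *\<^sub>R block_proj (blocks j) (H *v e (Suc j) + r j)"
    and residual: "\<And>j. j < p \<Longrightarrow> norm (r j) \<le> \<epsilon> * norm (e (Suc j))"
    and step_pos: "\<alpha> > 0" and L_nonneg: "L \<ge> 0" and eps_nonneg: "\<epsilon> \<ge> 0"
begin

definition path_length :: real where
  "path_length = (\<Sum>j<p. norm (e (Suc j) - e j))"

definition residual_sum :: real where
  "residual_sum = (\<Sum>j<p. norm (r j))"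

lemma path_length_nonneg: "path_length \<ge> 0"
  by (simp add: path_length_def sum_nonneg)

lemma residual_sum_nonneg: "residual_sum \<ge> 0"
  by (simp add: residual_sum_def sum_nonneg)

lemma increment_eq: "j < p \<Longrightarrow> e (Suc j) - e j = - \<alpha> *\<^sub>R block_proj (blocks j) (H *v e (Suc j) + r j)"
  by (subst step) simp_all

lemma block_proj_increment: "j < p \<Longrightarrow> block_proj (blocks j) (e (Suc j) - e j) = e (Suc j) - e j"
  by (simp add: increment_eq vec_eq_iff)

lemma block_proj_hessian_next:
  "j < p \<Longrightarrow> block_proj (blocks j) (H *v e (Suc j))
     = - (1/\<alpha>) *\<^sub>R (e (Suc j) - e j) - block_proj (blocks j) (r j)"
  using step_pos by (simp add: increment_eq vec_eq_iff)

lemma quadratic_form_step: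
  assumes j: "j < p"
  shows "e (Suc j) \<bullet> (H *v e (Suc j)) - e j \<bullet> (H *v e j)
    \<le> - (2/\<alpha> - L) * (norm (e (Suc j) - e j))^2 + 2 * norm (e (Suc j) - e j) * norm (r j)"
proof -
  define \<delta> where "\<delta> = e (Suc j) - e j"
  have \<delta>H: "\<delta> \<bullet> (H *v e (Suc j)) = - ((norm \<delta>)^2) / \<alpha> - \<delta> \<bullet> r j"
  proof -
    have "\<delta> \<bullet> (H *v e (Suc j)) = \<delta> \<bullet> block_proj (blocks j) (H *v e (Suc j))"
      using inner_block_proj_right[OF block_proj_increment[OF j]] by (simp add: \<delta>_def)
    also have "\<dots> = - (1/\<alpha>) * (\<delta> \<bullet> \<delta>) - \<delta> \<bullet> block_proj (blocks j) (r j)"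
      by (simp add: block_proj_hessian_next[OF j] inner_diff_right \<delta>_def)
    also have "\<delta> \<bullet> block_proj (blocks j) (r j) = \<delta> \<bullet> r j"
      using inner_block_proj_right[OF block_proj_increment[OF j]] by (simp add: \<delta>_def)
    finally show ?thesis
      by (simp add: power2_norm_eq_inner)
  qed
  have "e j \<bullet> (H *v e j)
      = e (Suc j) \<bullet> (H *v e (Suc j)) - 2 * (\<delta> \<bullet> (H *v e (Suc j))) + \<delta> \<bullet> (H *v \<delta>)"
    using sym[of "e (Suc j)" \<delta>] unfolding \<delta>_def
    by (simp add: matrix_vector_mult_diff_distrib inner_diff_left inner_diff_right)
  moreover have "- (\<delta> \<bullet> (H *v \<delta>)) \<le> L * (norm \<delta>)^2"
  proof -
    have "- (\<delta> \<bullet> (H *v \<delta>)) \<le> norm \<delta> * norm (H *v \<delta>)"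
      using Cauchy_Schwarz_ineq2[of \<delta> "H *v \<delta>"] by linarith
    also have "\<dots> \<le> norm \<delta> * (L * norm \<delta>)"
      by (intro mult_left_mono norm_H_le) auto
    finally show ?thesis
      by (simp add: power2_eq_square algebra_simps)
  qed
  moreover have "- (\<delta> \<bullet> r j) \<le> norm \<delta> * norm (r j)"
    using Cauchy_Schwarz_ineq2[of \<delta> "r j"] by linarith
  ultimately show ?thesis
    using \<delta>H unfolding \<delta>_def[symmetric]
    by (simp add: algebra_simps diff_divide_distrib add_divide_distrib)
qed

lemma quadratic_form_sweep:
  "e p \<bullet> (H *v e p) - e 0 \<bullet> (H *v e 0)
     \<le> - (2/\<alpha> - L) * (\<Sum>j<p. (norm (e (Suc j) - e j))^2) + 2 * path_length * residual_sum"
proof -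
  have "e p \<bullet> (H *v e p) - e 0 \<bullet> (H *v e 0)
      = (\<Sum>j<p. e (Suc j) \<bullet> (H *v e (Suc j)) - e j \<bullet> (H *v e j))"
    by (rule sum_lessThan_telescope[symmetric])
  also have "\<dots> \<le> (\<Sum>j<p. - (2/\<alpha> - L) * (norm (e (Suc j) - e j))^2
      + 2 * norm (e (Suc j) - e j) * norm (r j))"
    by (rule sum_mono) (rule quadratic_form_step, simp)
  also have "\<dots> = - (2/\<alpha> - L) * (\<Sum>j<p. (norm (e (Suc j) - e j))^2)
      + 2 * (\<Sum>j<p. norm (e (Suc j) - e j) * norm (r j))"
    by (simp add: sum.distrib sum_distrib_left mult.assoc)
  also have "(\<Sum>j<p. norm (e (Suc j) - e j) * norm (r j)) \<le> (\<Sum>j<p. norm (e (Suc j) - e j) * residual_sum)"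
    unfolding residual_sum_def by (intro sum_mono mult_left_mono member_le_sum) auto
  also have "\<dots> = path_length * residual_sum"
    by (simp add: path_length_def sum_distrib_right)
  finally show ?thesis
    by (simp add: mult.assoc)
qed

lemma norm_sub_start_le_path_length: "j \<le> p \<Longrightarrow> norm (e j - e 0) \<le> path_length"
proof -
  assume "j \<le> p"
  have "norm (e j - e 0) = norm (\<Sum>i<j. e (Suc i) - e i)"
    by (simp add: sum_lessThan_telescope)
  also have "\<dots> \<le> (\<Sum>i<j. norm (e (Suc i) - e i))"
    by (rule norm_sum)
  also have "\<dots> \<le> path_length"
    unfolding path_length_def using \<open>j \<le> p\<close> by (intro sum_mono2) auto
  finally show ?thesis .
qed

lemma quadratic_form_gain:
  assumes "\<alpha> * L < 2" "p \<ge> 1"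
  shows "e 0 \<bullet> (H *v e 0) - e p \<bullet> (H *v e p)
    \<ge> (2/\<alpha> - L) / p * path_length^2 - 2 * path_length * residual_sum"
proof -
  have "path_length^2 \<le> (\<Sum>j<p. (norm (e (Suc j) - e j))^2) * p"
    using sum_squared_le_sum_of_squares[of "\<lambda>j. norm (e (Suc j) - e j)" "{..<p}"]
    by (simp add: path_length_def)
  moreover have "2/\<alpha> - L > 0"
    using assms(1) step_pos by (simp add: field_simps)
  ultimately have "(2/\<alpha> - L) / p * path_length^2
      \<le> (2/\<alpha> - L) / p * ((\<Sum>j<p. (norm (e (Suc j) - e j))^2) * p)"
    by (intro mult_left_mono) auto
  also have "\<dots> = (2/\<alpha> - L) * (\<Sum>j<p. (norm (e (Suc j) - e j))^2)"
    using assms(2) by simp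
  finally show ?thesis
    using quadratic_form_sweep by linarith
qed

lemma norm_hessian_start_le: "norm (H *v e 0) \<le> (1/\<alpha> + p * L) * path_length + residual_sum"
proof -
  have block: "norm (block_proj (blocks j) (H *v e 0))
      \<le> norm (e (Suc j) - e j) / \<alpha> + norm (r j) + L * path_length" if j: "j < p" for j
  proof -
    have eq: "block_proj (blocks j) (H *v e 0) = - (1/\<alpha>) *\<^sub>R (e (Suc j) - e j)
        - block_proj (blocks j) (r j) - block_proj (blocks j) (H *v (e (Suc j) - e 0))"
      using block_proj_hessian_next[OF j]
      by (simp add: matrix_vector_mult_diff_distrib block_proj_diff)
    have "norm (block_proj (blocks j) (H *v e 0)) \<le> norm (- (1/\<alpha>) *\<^sub>R (e (Suc j) - e j))
        + norm (block_proj (blocks j) (r j)) + norm (block_proj (blocks j) (H *v (e (Suc j) - e 0)))"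
      unfolding eq by (rule norm_diff3_le)
    moreover have "norm (- (1/\<alpha>) *\<^sub>R (e (Suc j) - e j)) = norm (e (Suc j) - e j) / \<alpha>"
      using step_pos by simp
    moreover have "norm (block_proj (blocks j) (r j)) \<le> norm (r j)"
      by (rule norm_block_proj_le)
    moreover have "norm (block_proj (blocks j) (H *v (e (Suc j) - e 0))) \<le> L * path_length"
    proof -
      have "norm (block_proj (blocks j) (H *v (e (Suc j) - e 0))) \<le> L * norm (e (Suc j) - e 0)"
        using norm_block_proj_le norm_H_le by (rule order_trans)
      also have "\<dots> \<le> L * path_length"
        using j L_nonneg by (intro mult_left_mono norm_sub_start_le_path_length) auto
      finally show ?thesis .
    qed
    ultimately show ?thesis
      by linarith
  qed
  have "norm (H *v e 0) \<le> (\<Sum>j<p. norm (block_proj (blocks j) (H *v e 0)))"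
    by (rule norm_le_blocks)
  also have "\<dots> \<le> (\<Sum>j<p. norm (e (Suc j) - e j) / \<alpha> + norm (r j) + L * path_length)"
    by (rule sum_mono) (simp add: block)
  also have "\<dots> = path_length / \<alpha> + residual_sum + p * L * path_length"
    by (simp add: sum.distrib path_length_def residual_sum_def sum_divide_distrib)
  finally show ?thesis
    by (simp add: algebra_simps)
qed

lemma residual_sum_le: "residual_sum \<le> p * \<epsilon> * (norm (e 0) + path_length)"
proof -
  have "norm (r j) \<le> \<epsilon> * (norm (e 0) + path_length)" if "j < p" for j
  proof -
    have "norm (e (Suc j)) \<le> norm (e 0) + norm (e (Suc j) - e 0)"
      by (metis add.commute diff_add_cancel norm_triangle_ineq)
    also have "\<dots> \<le> norm (e 0) + path_length"
      using norm_sub_start_le_path_length[of "Suc j"] that by simp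
    finally show ?thesis
      using residual[OF that] eps_nonneg by (meson mult_left_mono order_trans)
  qed
  then have "residual_sum \<le> (\<Sum>j<p. \<epsilon> * (norm (e 0) + path_length))"
    unfolding residual_sum_def by (intro sum_mono) simp
  then show ?thesis
    by simp
qed

end

section \<open>PBCD near a critical point\<close>

locale pbcd_near_critical = lipschitz_gradient_step f gradf L \<alpha>
  for f :: "real^'n::finite \<Rightarrow> real" and gradf L \<alpha> +
  fixes hessf :: "real^'n \<Rightarrow> real^'n^'n" and B :: "'n set list" and xs :: "real^'n"
  assumes hess: "\<And>x. (gradf has_derivative (\<lambda>h. hessf x *v h)) (at x)"
    and hess_cont: "continuous_on UNIV hessf"
    and part: "block_partition B"
    and crit: "gradf xs = 0"
begin

abbreviation H :: "real^'n^'n" where "H \<equiv> hessf xs"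

abbreviation p :: nat where "p \<equiv> length B"

lemma hessian_sym: "u \<bullet> (H *v w) = w \<bullet> (H *v u)"
  by (rule hessian_symmetric[OF grad hess])

lemma norm_hessian_le: "norm (H *v w) \<le> L * norm w"
  by (rule norm_derivative_le_lipschitz[OF hess lip])

lemma gradient_linearization:
  assumes "\<epsilon> > 0"
  obtains \<rho> where "\<rho> > 0" "\<And>a b. a \<in> cball xs \<rho> \<Longrightarrow> b \<in> cball xs \<rho> \<Longrightarrow>
     norm (gradf a - gradf b - H *v (a - b)) \<le> \<epsilon> * norm (a - b)"
proof -
  define c where "c = real CARD('n) * real CARD('n)"
  have c: "c > 0"
    by (simp add: c_def)
  obtain \<rho> where \<rho>: "\<rho> > 0" "\<And>x. dist x xs < \<rho> \<Longrightarrow> dist (hessf x) H < \<epsilon> / c"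
    using hess_cont assms c unfolding continuous_on_iff by (metis UNIV_I divide_pos_pos)
  have onorm: "onorm (\<lambda>h. hessf x *v h - H *v h) \<le> \<epsilon>" if x: "x \<in> cball xs (\<rho>/2)" for x
  proof -
    have "norm (hessf x - H) \<le> \<epsilon> / c"
      using \<rho>(2)[of x] x \<rho>(1) by (simp add: dist_commute dist_norm)
    moreover have "\<bar>(hessf x - H)$i$j\<bar> \<le> norm (hessf x - H)" for i j
      using component_le_norm_cart[of "(hessf x - H)$i" j]
        Finite_Cartesian_Product.norm_nth_le[of "hessf x - H" i] by linarith
    ultimately have "\<bar>(hessf x - H)$i$j\<bar> \<le> \<epsilon> / c" for i j
      by (meson order_trans)
    then have "onorm ((*v) (hessf x - H)) \<le> c * (\<epsilon> / c)"
      unfolding c_def by (rule onorm_le_matrix_component)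
    moreover have "(\<lambda>h. hessf x *v h - H *v h) = (*v) (hessf x - H)"
      by (simp add: fun_eq_iff matrix_vector_mult_diff_rdistrib)
    ultimately show ?thesis
      using c by simp
  qed
  show ?thesis
  proof (rule that[of "\<rho>/2"])
    show "\<rho>/2 > 0"
      using \<rho> by simp
    fix a b
    assume a: "a \<in> cball xs (\<rho>/2)" and b: "b \<in> cball xs (\<rho>/2)"
    have "norm (gradf a - gradf b - H *v (a - b)) \<le> norm (a - b) * \<epsilon>"
    proof (rule differentiable_bound_linearization[where S="cball xs (\<rho>/2)" and f'="\<lambda>x h. hessf x *v h"])
      show "b + t *\<^sub>R (a - b) \<in> cball xs (\<rho>/2)" if "t \<in> {0..1}" for t
        using convex_cball[of xs "\<rho>/2", unfolded convex_alt, rule_format, of b a t] a b that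
        by (simp add: algebra_simps)
      show "(gradf has_derivative (\<lambda>h. hessf x *v h)) (at x within cball xs (\<rho>/2))" for x
        using hess by (rule has_derivative_at_withinI)
      show "onorm ((\<lambda>h. hessf x *v h) - (\<lambda>h. H *v h)) \<le> \<epsilon>" if "x \<in> cball xs (\<rho>/2)" for x
        using onorm[OF that] by (simp add: fun_diff_def)
      show "xs \<in> cball xs (\<rho>/2)"
        using \<rho> by simp
    qed
    then show "norm (gradf a - gradf b - H *v (a - b)) \<le> \<epsilon> * norm (a - b)"
      by (simp add: mult.commute)
  qed
qed

lemma partition_unique_block: "\<exists>!j. j < p \<and> i \<in> B!j"
proof -
  have "i \<in> \<Union>(set B)"
    using part by (simp add: block_partition_def)
  then obtain j where j: "j < p" "i \<in> B!j"
    by (metis UnionE in_set_conv_nth)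
  moreover have "j' = j" if "j' < p" "i \<in> B!j'" for j'
    using part j that unfolding block_partition_def by blast
  ultimately show ?thesis
    by blast
qed

lemma length_blocks_pos: "p \<ge> 1"
  using partition_unique_block[of undefined] by (cases B) auto

lemma sum_block_proj: "(\<Sum>j<p. block_proj (B!j) w) = w"
proof (subst vec_eq_iff, intro allI)
  fix i
  obtain j0 where j0: "j0 < p" "i \<in> B!j0" and unique: "\<And>j. j < p \<Longrightarrow> i \<in> B!j \<Longrightarrow> j = j0"
    using partition_unique_block[of i] by blast
  have "(\<Sum>j<p. block_proj (B!j) w) $ i = (\<Sum>j<p. if i \<in> B!j then w$i else 0)"
    by (simp add: sum_component)
  also have "\<dots> = (\<Sum>j<p. if j = j0 then w$i else 0)"
  proof (rule sum.cong[OF refl])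
    fix j
    assume "j \<in> {..<p}"
    then have "j < p"
      by simp
    show "(if i \<in> B!j then w$i else 0) = (if j = j0 then w$i else 0)"
    proof (cases "j = j0")
      case False
      then have "i \<notin> B!j"
        using unique \<open>j < p\<close> by blast
      then show ?thesis
        using False by simp
    qed (use j0 in simp)
  qed
  also have "\<dots> = w$i"
    using j0 by simp
  finally show "(\<Sum>j<p. block_proj (B!j) w) $ i = w $ i" .
qed

lemma norm_le_sum_block_proj: "norm w \<le> (\<Sum>j<p. norm (block_proj (B!j) w))"
  using norm_sum[of "\<lambda>j. block_proj (B!j) w" "{..<p}"] by (simp add: sum_block_proj)

definition partial_sweep :: "real^'n \<Rightarrow> nat \<Rightarrow> real^'n" where
  "partial_sweep x j = fold (block_step f \<alpha>) (take j B) x"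

lemma partial_sweep_0 [simp]: "partial_sweep x 0 = x"
  by (simp add: partial_sweep_def)

lemma partial_sweep_length [simp]: "partial_sweep x p = pbcd f \<alpha> B x"
  by (simp add: partial_sweep_def pbcd_def)

lemma partial_sweep_Suc: "j < p \<Longrightarrow> partial_sweep x (Suc j) = block_step f \<alpha> (B!j) (partial_sweep x j)"
  by (simp add: partial_sweep_def take_Suc_conv_app_nth)

lemma partial_sweep_critical: "partial_sweep xs j = xs"
proof -
  have "fold (block_step f \<alpha>) l xs = xs" for l
    by (induction l) (auto simp: block_step_critical[OF crit])
  then show ?thesis
    by (simp add: partial_sweep_def)
qed

definition block_lip :: real where
  "block_lip = 1 / (1 - \<alpha> * L)"

lemma block_lip_ge_1: "block_lip \<ge> 1"
  using step_small step_pos L_pos by (simp add: block_lip_def field_simps)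

lemma partial_sweep_lipschitz:
  "j \<le> p \<Longrightarrow> norm (partial_sweep x j - partial_sweep y j) \<le> block_lip^j * norm (x - y)"
proof (induction j)
  case (Suc j)
  then have j: "j < p"
    by simp
  have "norm (partial_sweep x (Suc j) - partial_sweep y (Suc j))
      \<le> block_lip * norm (partial_sweep x j - partial_sweep y j)"
    unfolding partial_sweep_Suc[OF j] block_lip_def
    using block_step_lipschitz[of "B!j" "partial_sweep x j" "partial_sweep y j"] by simp
  also have "\<dots> \<le> block_lip * (block_lip^j * norm (x - y))"
    using Suc j block_lip_ge_1 by (intro mult_left_mono) auto
  finally show ?case
    by simp
qed simp

lemma pbcd_lipschitz: "norm (pbcd f \<alpha> B x - pbcd f \<alpha> B y) \<le> block_lip^p * norm (x - y)"
  using partial_sweep_lipschitz[of p x y] by simp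

lemma norm_partial_sweep_sub_critical_le:
  assumes "j \<le> p"
  shows "norm (partial_sweep x j - xs) \<le> block_lip^p * norm (x - xs)"
proof -
  have "norm (partial_sweep x j - xs) \<le> block_lip^j * norm (x - xs)"
    using partial_sweep_lipschitz[OF assms, of x xs] by (simp add: partial_sweep_critical)
  also have "\<dots> \<le> block_lip^p * norm (x - xs)"
    using block_lip_ge_1 assms by (intro mult_right_mono power_increasing) auto
  finally show ?thesis .
qed

lemma perturbed_linear_sweep_pair:
  assumes eps: "\<epsilon> \<ge> 0"
    and lin: "\<And>a b. a \<in> cball xs \<rho> \<Longrightarrow> b \<in> cball xs \<rho> \<Longrightarrow>
        norm (gradf a - gradf b - H *v (a - b)) \<le> \<epsilon> * norm (a - b)"
    and x: "block_lip^p * norm (x - xs) \<le> \<rho>" and y: "block_lip^p * norm (y - xs) \<le> \<rho>"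
  shows "perturbed_linear_sweep H L \<alpha> \<epsilon> p (\<lambda>j. B!j)
    (\<lambda>j. partial_sweep x j - partial_sweep y j)
    (\<lambda>j. gradf (partial_sweep x (Suc j)) - gradf (partial_sweep y (Suc j))
       - H *v (partial_sweep x (Suc j) - partial_sweep y (Suc j)))"
proof (unfold_locales)
  fix j
  assume j: "j < p"
  have implicit: "partial_sweep z (Suc j)
      = partial_sweep z j - \<alpha> *\<^sub>R block_proj (B!j) (gradf (partial_sweep z (Suc j)))" for z
    unfolding partial_sweep_Suc[OF j] by (rule block_step_implicit)
  have "a - b = c - d - \<alpha> *\<^sub>R block_proj S (M *v (a - b) + (ga - gb - M *v (a - b)))"
    if "a = c - \<alpha> *\<^sub>R block_proj S ga" "b = d - \<alpha> *\<^sub>R block_proj S gb"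
    for a b c d ga gb :: "real^'n" and S and M :: "real^'n^'n"
    using that by (simp add: block_proj_diff algebra_simps)
  from this[OF implicit implicit]
  show "partial_sweep x (Suc j) - partial_sweep y (Suc j)
      = partial_sweep x j - partial_sweep y j - \<alpha> *\<^sub>R block_proj (B!j)
        (H *v (partial_sweep x (Suc j) - partial_sweep y (Suc j))
         + (gradf (partial_sweep x (Suc j)) - gradf (partial_sweep y (Suc j))
            - H *v (partial_sweep x (Suc j) - partial_sweep y (Suc j))))" .
  have "partial_sweep z (Suc j) \<in> cball xs \<rho>" if "block_lip^p * norm (z - xs) \<le> \<rho>" for z
    using norm_partial_sweep_sub_critical_le[of "Suc j" z] j that
    by (simp add: dist_norm norm_minus_commute)
  then show "norm (gradf (partial_sweep x (Suc j)) - gradf (partial_sweep y (Suc j))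
      - H *v (partial_sweep x (Suc j) - partial_sweep y (Suc j)))
      \<le> \<epsilon> * norm (partial_sweep x (Suc j) - partial_sweep y (Suc j))"
    using x y by (intro lin) auto
qed (use hessian_sym norm_hessian_le norm_le_sum_block_proj step_pos L_pos eps in auto)

text \<open>The cone form is positive only on vectors with a large component along the eigenvectors of \<open>H\<close>
  with eigenvalues below \<open>-\<gamma>\<close>.\<close>

definition cone_form :: "real \<Rightarrow> real^'n \<Rightarrow> real" where
  "cone_form \<gamma> v = - (v \<bullet> (H *v v)) - \<gamma> * (norm v)^2"

lemma cone_form_le: "\<gamma> \<ge> 0 \<Longrightarrow> cone_form \<gamma> v \<le> L * (norm v)^2"
proof -
  assume "\<gamma> \<ge> 0"
  have "- (v \<bullet> (H *v v)) \<le> norm v * norm (H *v v)"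
    using Cauchy_Schwarz_ineq2[of v "H *v v"] by linarith
  also have "\<dots> \<le> norm v * (L * norm v)"
    by (intro mult_left_mono norm_hessian_le) auto
  finally have "- (v \<bullet> (H *v v)) \<le> L * (norm v)^2"
    by (simp add: power2_eq_square mult.left_commute)
  moreover have "\<gamma> * (norm v)^2 \<ge> 0"
    using \<open>\<gamma> \<ge> 0\<close> by simp
  ultimately show ?thesis
    by (simp add: cone_form_def)
qed

lemma sweep_gain_bounds:
  fixes \<epsilon> \<rho> C1 \<gamma> :: real
  assumes eps: "\<epsilon> \<ge> 0"
    and lin: "\<And>a b. a \<in> cball xs \<rho> \<Longrightarrow> b \<in> cball xs \<rho> \<Longrightarrow>
        norm (gradf a - gradf b - H *v (a - b)) \<le> \<epsilon> * norm (a - b)"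
    and x: "block_lip^p * norm (x - xs) \<le> \<rho>" and y: "block_lip^p * norm (y - xs) \<le> \<rho>"
    and C1: "\<And>v. \<bar>v \<bullet> (H *v v)\<bar> \<le> C1 * (norm (H *v v))^2" "C1 \<ge> 0"
    and \<gamma>: "\<gamma> \<ge> 0" and start: "cone_form \<gamma> (x - y) \<ge> 0"
  obtains A R where
    "cone_form \<gamma> (pbcd f \<alpha> B x - pbcd f \<alpha> B y) - cone_form \<gamma> (x - y)
       \<ge> (2/\<alpha> - L) / p * A^2 - 2*A*R - 2*\<gamma>*norm (x - y)*A - \<gamma>*A^2"
    "\<gamma> * (norm (x - y))^2 \<le> C1 * ((1/\<alpha> + p * L)*A + R)^2"
    "R \<le> p * \<epsilon> * (norm (x - y) + A)"
    "A \<ge> 0" "R \<ge> 0"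
proof -
  define e where "e j = partial_sweep x j - partial_sweep y j" for j
  interpret S: perturbed_linear_sweep H L \<alpha> \<epsilon> p "\<lambda>j. B!j" e
    "\<lambda>j. gradf (partial_sweep x (Suc j)) - gradf (partial_sweep y (Suc j))
       - H *v (partial_sweep x (Suc j) - partial_sweep y (Suc j))"
    unfolding e_def by (rule perturbed_linear_sweep_pair[OF eps lin x y])
  define A where "A = S.path_length"
  define R where "R = S.residual_sum"
  define X where "X = norm (x - y)"
  have e0: "e 0 = x - y" and ep: "e p = pbcd f \<alpha> B x - pbcd f \<alpha> B y"
    by (simp_all add: e_def)
  have "\<alpha> * L < 2"
    using step_small by simp
  then have quad: "e 0 \<bullet> (H *v e 0) - e p \<bullet> (H *v e p) \<ge> (2/\<alpha> - L) / p * A^2 - 2*A*R"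
    using S.quadratic_form_gain length_blocks_pos unfolding A_def R_def by blast
  have "norm (e p) \<le> X + A"
    using S.norm_sub_start_le_path_length[of p] norm_triangle_ineq[of "e p - e 0" "e 0"]
    by (simp add: A_def X_def e0)
  then have "(norm (e p))^2 \<le> (X + A)^2"
    by (intro power_mono) auto
  then have "\<gamma> * ((norm (e p))^2 - X^2) \<le> \<gamma> * (2*X*A + A^2)"
    using \<gamma> by (intro mult_left_mono) (auto simp: power2_sum)
  then have "cone_form \<gamma> (pbcd f \<alpha> B x - pbcd f \<alpha> B y) - cone_form \<gamma> (x - y)
      \<ge> (2/\<alpha> - L) / p * A^2 - 2*A*R - 2*\<gamma>*X*A - \<gamma>*A^2"
    using quad unfolding cone_form_def ep[symmetric] e0[symmetric]
    by (simp add: e0 X_def algebra_simps)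
  moreover have "\<gamma> * X^2 \<le> C1 * ((1/\<alpha> + p * L)*A + R)^2"
  proof -
    have "\<gamma> * X^2 \<le> - (e 0 \<bullet> (H *v e 0))"
      using start by (simp add: cone_form_def e0 X_def)
    also have "\<dots> \<le> C1 * (norm (H *v e 0))^2"
      using C1(1)[of "e 0"] by linarith
    also have "\<dots> \<le> C1 * ((1/\<alpha> + p * L)*A + R)^2"
      using S.norm_hessian_start_le C1(2) unfolding A_def R_def
      by (intro mult_left_mono power_mono) auto
    finally show ?thesis .
  qed
  moreover have "R \<le> p * \<epsilon> * (X + A)"
    using S.residual_sum_le by (simp add: A_def R_def X_def e0)
  moreover have "A \<ge> 0" "R \<ge> 0"
    by (simp_all add: A_def R_def S.path_length_nonneg S.residual_sum_nonneg)
  ultimately show ?thesis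
    unfolding X_def by (rule that)
qed

lemma cone_form_growth:
  assumes "\<gamma>0 > 0"
  obtains \<gamma> c r0 where "0 < \<gamma>" "\<gamma> \<le> \<gamma>0" "c > 0" "r0 > 0"
    "\<And>x y. x \<in> cball xs r0 \<Longrightarrow> y \<in> cball xs r0 \<Longrightarrow> cone_form \<gamma> (x - y) \<ge> 0 \<Longrightarrow>
       cone_form \<gamma> (pbcd f \<alpha> B x - pbcd f \<alpha> B y) \<ge> cone_form \<gamma> (x - y) + c * (norm (x - y))^2"
proof -
  define c1 where "c1 = (2/\<alpha> - L) / real p"
  define K1 where "K1 = 1/\<alpha> + real p * L"
  have "2/\<alpha> - L > 0"
    using step_small step_pos by (simp add: field_simps)
  then have c1: "c1 > 0"
    unfolding c1_def using length_blocks_pos by (intro divide_pos_pos) auto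
  have p: "real p \<ge> 1"
    using length_blocks_pos by simp
  obtain C1 where C1: "C1 > 0" "\<And>v. \<bar>v \<bullet> (H *v v)\<bar> \<le> C1 * (norm (H *v v))^2"
    using symmetric_quadratic_form_le_norm_image[OF hessian_sym] by blast
  obtain \<gamma> \<epsilon> where \<gamma>: "0 < \<gamma>" "\<gamma> \<le> \<gamma>0" "\<gamma> \<le> 1" "\<gamma> \<le> c1/8"
      "\<gamma> \<le> c1 * (c1/(8*(4*C1*K1^2 + 1))) / 8"
    and \<epsilon>: "\<epsilon> > 0" "4*C1*(real p)^2*\<epsilon>^2 \<le> \<gamma>/2"
      "real p*\<epsilon>*((4*C1*K1^2/\<gamma> + 1) + 3) \<le> c1/8"
    using cone_parameters_exist[OF c1 C1(1) p assms] by blast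
  obtain \<rho> where \<rho>: "\<rho> > 0" and lin: "\<And>a b. a \<in> cball xs \<rho> \<Longrightarrow> b \<in> cball xs \<rho> \<Longrightarrow>
      norm (gradf a - gradf b - H *v (a - b)) \<le> \<epsilon> * norm (a - b)"
    using gradient_linearization[OF \<epsilon>(1)] by blast
  have Kp: "block_lip^p \<ge> 1"
    using block_lip_ge_1 by simp
  show ?thesis
  proof (rule that[of \<gamma> "c1 / (2*(4*C1*K1^2/\<gamma> + 1))" "\<rho> / block_lip^p"])
    show "0 < \<gamma>" "\<gamma> \<le> \<gamma>0"
      using \<gamma> by simp_all
    show "c1 / (2*(4*C1*K1^2/\<gamma> + 1)) > 0"
      using c1 C1 \<gamma> by (simp add: add_nonneg_pos)
    show "\<rho> / block_lip^p > 0"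
      using \<rho> Kp by simp
    fix x y
    assume "x \<in> cball xs (\<rho> / block_lip^p)" "y \<in> cball xs (\<rho> / block_lip^p)"
      and start: "cone_form \<gamma> (x - y) \<ge> 0"
    then have "block_lip^p * norm (x - xs) \<le> \<rho>" "block_lip^p * norm (y - xs) \<le> \<rho>"
      using Kp by (simp_all add: dist_norm norm_minus_commute field_simps)
    then obtain A R where
      gain: "cone_form \<gamma> (pbcd f \<alpha> B x - pbcd f \<alpha> B y) - cone_form \<gamma> (x - y)
        \<ge> c1 * A^2 - 2*A*R - 2*\<gamma>*norm (x - y)*A - \<gamma>*A^2"
      and start_bound: "\<gamma> * (norm (x - y))^2 \<le> C1 * (K1*A + R)^2"
      and residual: "R \<le> p * \<epsilon> * (norm (x - y) + A)"
      and AR: "A \<ge> 0" "R \<ge> 0"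
      using sweep_gain_bounds[OF less_imp_le[OF \<epsilon>(1)] lin _ _ C1(2) less_imp_le[OF C1(1)]
          less_imp_le[OF \<gamma>(1)] start]
      unfolding c1_def K1_def by blast
    have "cone_form \<gamma> (pbcd f \<alpha> B x - pbcd f \<alpha> B y) - cone_form \<gamma> (x - y)
        \<ge> c1 / (2*(4*C1*K1^2/\<gamma> + 1)) * (norm (x - y))^2"
      by (rule cone_form_gain_arith[OF AR norm_ge_zero _ less_imp_le[OF \<epsilon>(1)] C1(1) c1 gain
            start_bound residual \<gamma>(1,3,4,5) \<epsilon>(2,3)]) (use p in simp)
    then show "cone_form \<gamma> (pbcd f \<alpha> B x - pbcd f \<alpha> B y)
        \<ge> cone_form \<gamma> (x - y) + c1 / (2*(4*C1*K1^2/\<gamma> + 1)) * (norm (x - y))^2"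
      by simp
  qed
qed

definition local_stable_set :: "real \<Rightarrow> (real^'n) set" where
  "local_stable_set r = {x. \<forall>k. (pbcd f \<alpha> B ^^ k) x \<in> cball xs r}"

text \<open>Along two trajectories that stay near \<open>xs\<close>, a positive value of the cone form would grow
  at least linearly in \<open>k\<close>, while it is bounded by \<open>L (2 r)\<^sup>2\<close>.\<close>

lemma cone_form_nonpos_on_local_stable_set:
  assumes \<gamma>: "0 < \<gamma>" and c: "c > 0"
    and growth: "\<And>x y. x \<in> cball xs r \<Longrightarrow> y \<in> cball xs r \<Longrightarrow> cone_form \<gamma> (x - y) \<ge> 0 \<Longrightarrow>
       cone_form \<gamma> (pbcd f \<alpha> B x - pbcd f \<alpha> B y) \<ge> cone_form \<gamma> (x - y) + c * (norm (x - y))^2"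
    and x: "x \<in> local_stable_set r" and y: "y \<in> local_stable_set r"
  shows "cone_form \<gamma> (x - y) \<le> 0"
proof (rule ccontr)
  define F where "F = pbcd f \<alpha> B"
  define e where "e k = (F ^^ k) x - (F ^^ k) y" for k
  define q where "q = cone_form \<gamma> (x - y)"
  assume "\<not> cone_form \<gamma> (x - y) \<le> 0"
  then have q: "q > 0"
    by (simp add: q_def)
  have xk: "(F ^^ k) x \<in> cball xs r" and yk: "(F ^^ k) y \<in> cball xs r" for k
    using x y by (simp_all add: local_stable_set_def F_def)
  define a where "a = c * q / L"
  have a: "a > 0"
    using c q L_pos by (simp add: a_def)
  have step: "a \<le> c * (norm (e k))^2" if "cone_form \<gamma> (e k) \<ge> q" for k
  proof -
    have "q \<le> L * (norm (e k))^2"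
      using that cone_form_le[of \<gamma> "e k"] \<gamma> by simp
    then show ?thesis
      using c L_pos by (simp add: a_def field_simps)
  qed
  have linear: "cone_form \<gamma> (e k) \<ge> q + k * a" for k
  proof (induction k)
    case (Suc k)
    have "k * a \<ge> 0"
      using a by simp
    then have "cone_form \<gamma> (e k) \<ge> q"
      using Suc by linarith
    then have "cone_form \<gamma> (e (Suc k)) \<ge> cone_form \<gamma> (e k) + c * (norm (e k))^2"
      using growth[OF xk yk] q by (simp add: e_def F_def)
    then show ?case
      using Suc step[OF \<open>cone_form \<gamma> (e k) \<ge> q\<close>] by (simp add: algebra_simps)
  qed (simp add: e_def q_def)
  have bounded: "cone_form \<gamma> (e k) \<le> L * (2*r)^2" for k
  proof -
    have "norm (e k) \<le> dist ((F ^^ k) x) xs + dist xs ((F ^^ k) y)"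
      unfolding e_def dist_norm using norm_triangle_ineq[of "(F ^^ k) x - xs" "xs - (F ^^ k) y"] by simp
    also have "\<dots> \<le> 2*r"
      using xk[of k] yk[of k] by (simp add: dist_commute)
    finally have "(norm (e k))^2 \<le> (2*r)^2"
      by (intro power_mono) auto
    have "cone_form \<gamma> (e k) \<le> L * (norm (e k))^2"
      using \<gamma> by (intro cone_form_le) simp
    also have "\<dots> \<le> L * (2*r)^2"
      using L_pos \<open>(norm (e k))^2 \<le> (2*r)^2\<close> by (intro mult_left_mono) auto
    finally show ?thesis .
  qed
  obtain k :: nat where "L * (2*r)^2 < k * a"
    using reals_Archimedean3[OF a] by blast
  then show False
    using linear[of k] bounded[of k] q by linarith
qed

lemma norm_le_of_cone_form_nonpos:
  assumes u: "norm u = 1" and Hu: "H *v u = \<mu> *\<^sub>R u" and \<gamma>: "0 \<le> \<gamma>" "\<gamma> < - \<mu>"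
    and Q: "cone_form \<gamma> d \<le> 0"
  shows "norm d \<le> (1 + sqrt ((L + \<gamma>) / (- \<mu> - \<gamma>))) * norm (d - (d \<bullet> u) *\<^sub>R u)"
proof -
  define t where "t = d \<bullet> u"
  define w where "w = d - t *\<^sub>R u"
  have uu: "u \<bullet> u = 1"
    using u by (simp add: norm_eq_1)
  have d: "d = t *\<^sub>R u + w"
    by (simp add: w_def)
  have wu: "w \<bullet> u = 0"
    by (simp add: w_def t_def inner_diff_left uu)
  have uHw: "u \<bullet> (H *v w) = 0"
    using hessian_sym[of u w] Hu wu by (simp add: inner_commute)
  have dHd: "d \<bullet> (H *v d) = t^2 * \<mu> + w \<bullet> (H *v w)"
    unfolding d using uHw wu uu
    by (simp add: matrix_vector_right_distrib matrix_vector_mult_scaleR Hu inner_add_left inner_add_right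
        inner_commute power2_eq_square)
  have nd: "(norm d)^2 = t^2 + (norm w)^2"
    unfolding power2_norm_eq_inner d using wu uu
    by (simp add: inner_add_left inner_add_right inner_commute power2_eq_square)
  have "w \<bullet> (H *v w) \<le> L * (norm w)^2"
  proof -
    have "w \<bullet> (H *v w) \<le> norm w * norm (H *v w)"
      using Cauchy_Schwarz_ineq2[of w "H *v w"] by linarith
    also have "\<dots> \<le> norm w * (L * norm w)"
      by (intro mult_left_mono norm_hessian_le) auto
    finally show ?thesis
      by (simp add: power2_eq_square algebra_simps)
  qed
  then have "t^2 * (- \<mu> - \<gamma>) \<le> (L + \<gamma>) * (norm w)^2"
    using Q dHd nd by (simp add: cone_form_def algebra_simps)
  then have "t^2 \<le> ((L + \<gamma>) / (- \<mu> - \<gamma>)) * (norm w)^2"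
    using \<gamma> by (simp add: field_simps)
  then have "sqrt (t^2) \<le> sqrt (((L + \<gamma>) / (- \<mu> - \<gamma>)) * (norm w)^2)"
    by (rule real_sqrt_le_mono)
  then have "\<bar>t\<bar> \<le> sqrt ((L + \<gamma>) / (- \<mu> - \<gamma>)) * norm w"
    by (simp only: real_sqrt_mult real_sqrt_abs abs_norm_cancel)
  moreover have "norm d \<le> \<bar>t\<bar> + norm w"
    using norm_triangle_ineq[of "t *\<^sub>R u" w] u d by simp
  ultimately show ?thesis
    by (simp add: w_def t_def algebra_simps)
qed

text \<open>Differences of points of the local stable set lie in a cone around the hyperplane orthogonal
  to a negative eigenvector \<open>u\<close> of \<open>H\<close>, so the set is a Lipschitz graph over that hyperplane.\<close>

lemma negligible_local_stable_set:
  assumes saddle: "lambda_min H < 0"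
  obtains r where "r > 0" "negligible (local_stable_set r)"
proof -
  obtain \<mu> u where \<mu>: "\<mu> < 0" and u: "norm u = 1" and Hu: "H *v u = \<mu> *\<^sub>R u"
    using lambda_min_neg_imp_eigenvector[OF hessian_sym saddle] by blast
  obtain \<gamma> c r where \<gamma>: "0 < \<gamma>" "\<gamma> \<le> - \<mu> / 2" and c: "c > 0" and r: "r > 0"
    and growth: "\<And>x y. x \<in> cball xs r \<Longrightarrow> y \<in> cball xs r \<Longrightarrow> cone_form \<gamma> (x - y) \<ge> 0 \<Longrightarrow>
       cone_form \<gamma> (pbcd f \<alpha> B x - pbcd f \<alpha> B y) \<ge> cone_form \<gamma> (x - y) + c * (norm (x - y))^2"
    using cone_form_growth[of "- \<mu> / 2"] \<mu> by auto
  define \<pi> where "\<pi> z = z - (z \<bullet> u) *\<^sub>R u" for z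
  have "negligible (\<pi> ` local_stable_set r)"
  proof (rule negligible_subset[OF negligible_hyperplane[of u 0]])
    show "\<pi> ` local_stable_set r \<subseteq> {z. u \<bullet> z = 0}"
      using u by (auto simp: \<pi>_def inner_diff_right inner_commute norm_eq_1)
  qed (use u in auto)
  moreover have "norm (x - y) \<le> (1 + sqrt ((L + \<gamma>) / (- \<mu> - \<gamma>))) * norm (\<pi> x - \<pi> y)"
    if "x \<in> local_stable_set r" "y \<in> local_stable_set r" for x y
  proof -
    have "(x - y) - ((x - y) \<bullet> u) *\<^sub>R u = \<pi> x - \<pi> y"
      by (simp add: \<pi>_def inner_diff_left algebra_simps)
    then show ?thesis
      using norm_le_of_cone_form_nonpos[OF u Hu _ _ cone_form_nonpos_on_local_stable_set[OF \<gamma>(1) c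
            growth that]] \<gamma> \<mu> by simp
  qed
  ultimately have "negligible (local_stable_set r)"
    by (rule negligible_if_lipschitz_inverse)
  with r show ?thesis
    by (rule that)
qed

definition pbcd_undo :: "real^'n \<Rightarrow> real^'n" where
  "pbcd_undo = foldr block_undo B"

lemma pbcd_undo_pbcd: "pbcd_undo (pbcd f \<alpha> B x) = x"
proof -
  have "foldr block_undo l (fold (block_step f \<alpha>) l x) = x" for l
    by (induction l arbitrary: x) (auto simp: block_undo_block_step)
  then show ?thesis
    by (simp add: pbcd_undo_def pbcd_def)
qed

lemma funpow_pbcd_undo_pbcd: "(pbcd_undo ^^ N) ((pbcd f \<alpha> B ^^ N) x) = x"
proof (induction N)
  case (Suc N)
  have "(pbcd_undo ^^ Suc N) y = (pbcd_undo ^^ N) (pbcd_undo y)" for y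
    by (simp add: funpow_Suc_right del: funpow.simps)
  then show ?case
    using Suc by (simp add: pbcd_undo_pbcd)
qed simp

lemma pbcd_undo_lipschitz: "norm (pbcd_undo x - pbcd_undo y) \<le> (1 + \<alpha> * L)^p * norm (x - y)"
proof -
  have "norm (foldr block_undo l x - foldr block_undo l y) \<le> (1 + \<alpha> * L)^length l * norm (x - y)" for l
  proof (induction l)
    case (Cons S l)
    have "norm (foldr block_undo (S # l) x - foldr block_undo (S # l) y)
        \<le> (1 + \<alpha> * L) * norm (foldr block_undo l x - foldr block_undo l y)"
      by (simp add: block_undo_lipschitz)
    also have "\<dots> \<le> (1 + \<alpha> * L) * ((1 + \<alpha> * L)^length l * norm (x - y))"
      using Cons step_pos L_pos by (intro mult_left_mono) auto
    finally show ?case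
      by simp
  qed simp
  then show ?thesis
    by (simp add: pbcd_undo_def)
qed

lemma continuous_on_funpow_pbcd: "continuous_on UNIV (pbcd f \<alpha> B ^^ k)"
proof (rule lipschitz_on_continuous_on[OF lipschitz_onI])
  show "dist ((pbcd f \<alpha> B ^^ k) x) ((pbcd f \<alpha> B ^^ k) y) \<le> (block_lip^p)^k * dist x y" for x y
    using funpow_lipschitz[OF pbcd_lipschitz, of k x y] block_lip_ge_1 by (simp add: dist_norm)
  show "0 \<le> (block_lip^p)^k"
    using block_lip_ge_1 by simp
qed

text \<open>A trajectory converging to \<open>xs\<close> eventually stays in the local stable set, so its starting
  point is the image of that set under some power of the Lipschitz map \<open>pbcd_undo\<close>.\<close>

lemma negligible_converging_to_saddle:
  assumes saddle: "lambda_min H < 0"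
  shows "negligible {x0. (\<lambda>k. (pbcd f \<alpha> B ^^ k) x0) \<longlonglongrightarrow> xs}"
proof -
  obtain r where r: "r > 0" and W: "negligible (local_stable_set r)"
    using negligible_local_stable_set[OF saddle] by blast
  have "{x0. (\<lambda>k. (pbcd f \<alpha> B ^^ k) x0) \<longlonglongrightarrow> xs} \<subseteq> (\<Union>N. (pbcd_undo ^^ N) ` local_stable_set r)"
  proof
    fix x0
    assume "x0 \<in> {x0. (\<lambda>k. (pbcd f \<alpha> B ^^ k) x0) \<longlonglongrightarrow> xs}"
    then obtain N where N: "\<And>k. k \<ge> N \<Longrightarrow> dist ((pbcd f \<alpha> B ^^ k) x0) xs < r"
      using r unfolding lim_sequentially by auto
    have "(pbcd f \<alpha> B ^^ k) ((pbcd f \<alpha> B ^^ N) x0) \<in> cball xs r" for k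
      using N[of "k + N"] by (simp add: funpow_add dist_commute)
    then have "(pbcd f \<alpha> B ^^ N) x0 \<in> local_stable_set r"
      by (simp add: local_stable_set_def)
    moreover have "x0 = (pbcd_undo ^^ N) ((pbcd f \<alpha> B ^^ N) x0)"
      by (simp add: funpow_pbcd_undo_pbcd)
    ultimately show "x0 \<in> (\<Union>N. (pbcd_undo ^^ N) ` local_stable_set r)"
      by blast
  qed
  moreover have "negligible (\<Union>N. (pbcd_undo ^^ N) ` local_stable_set r)"
  proof (rule negligible_Union_nat)
    fix N
    have "(1 + \<alpha> * L)^p \<ge> 0"
      using step_pos L_pos by simp
    then show "negligible ((pbcd_undo ^^ N) ` local_stable_set r)"
      using W funpow_lipschitz[OF pbcd_undo_lipschitz] by (intro negligible_lipschitz_image) blast+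
  qed
  ultimately show ?thesis
    by (rule negligible_subset[rotated])
qed

lemma converging_to_saddle_borel: "{x0. (\<lambda>k. (pbcd f \<alpha> B ^^ k) x0) \<longlonglongrightarrow> xs} \<in> sets borel"
proof -
  have "(pbcd f \<alpha> B ^^ k) \<in> borel_measurable borel" for k
    using continuous_on_funpow_pbcd by (rule borel_measurable_continuous_onI)
  then have "Measurable.pred borel (\<lambda>x0. (\<lambda>k. (pbcd f \<alpha> B ^^ k) x0) \<longlonglongrightarrow> xs)"
    by (rule measurable_limit)
  then show ?thesis
    by (simp add: pred_def)
qed

end

theorem theorem6:
  fixes f :: "real^'n::finite \<Rightarrow> real"
    and gradf :: "real^'n \<Rightarrow> real^'n"
    and hessf :: "real^'n \<Rightarrow> real^'n^'n"
    and L \<alpha> :: real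
    and B :: "'n set list"
    and xs :: "real^'n"
    and \<nu> :: "(real^'n) measure"
  assumes grad: "\<And>x. (f has_derivative (\<lambda>h. gradf x \<bullet> h)) (at x)"
    and hess: "\<And>x. (gradf has_derivative (\<lambda>h. hessf x *v h)) (at x)"
    and hess_cont: "continuous_on UNIV hessf"
    and L_pos: "L > 0"
    and lip: "\<And>x y. norm (gradf x - gradf y) \<le> L * norm (x - y)"
    and part: "block_partition B"
    and step: "0 < \<alpha>" "\<alpha> < 1 / L"
    and crit: "gradf xs = 0"
    and saddle: "lambda_min (hessf xs) < 0"
    and prob: "prob_space \<nu>"
    and sets_nu: "sets \<nu> = sets borel"
    and ac: "absolutely_continuous lborel \<nu>"
  shows "{x0. (\<lambda>k. (pbcd f \<alpha> B ^^ k) x0) \<longlonglongrightarrow> xs} \<in> null_sets \<nu>"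
proof -
  have "\<alpha> * L < 1"
    using step L_pos by (simp add: field_simps)
  then interpret pbcd_near_critical f gradf L \<alpha> hessf B xs
    by unfold_locales (use grad L_pos lip step hess hess_cont part crit in auto)
  let ?C = "{x0. (\<lambda>k. (pbcd f \<alpha> B ^^ k) x0) \<longlonglongrightarrow> xs}"
  have "negligible ?C"
    using negligible_converging_to_saddle saddle by blast
  then have "?C \<in> null_sets lebesgue"
    by (simp add: negligible_iff_null_sets)
  moreover have "?C \<in> sets lborel"
    using converging_to_saddle_borel by simp
  ultimately have "?C \<in> null_sets lborel"
    using null_sets_completion_iff by blast
  then show ?thesis
    using ac unfolding absolutely_continuous_def by blast
qed

end
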